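(* Let $R\in\{\mathbb Z,\mathbb Z_2\}$, let $K$ be an $(n-1)$-dimensional star-shaped simplicial sphere on $[m]$, let $\lambda_1,\lambda_2$ be R-characteristic maps over $K$ (regarded as $n\times m$ matrices) and let $v\in[m]$. Then $\lambda_1$ and $\lambda_2$ are joined by an edge colored $v$ in the pre-diagram $D'(K)$ if and only if $\operatorname{Pr}(\lambda_1,v)$ and $\operatorname{Pr}(\lambda_2,v)$ coincide up to left multiplication by an element of $GL_{n-1}(R)$.
   Context: An $R$-basis of $R^n$ is a $\mathbb Z$-basis of $\mathbb Z^n$ ($R=\mathbb Z$) or a basis of $\mathbb Z_2^n$ ($R=\mathbb Z_2$). An $R$-characteristic map over a simplicial complex $L$ with $(n-1)$-dimensional facets is a map $\lambda$ from the vertex set to $R^n$ such that the images of the vertices of each $(n-1)$-face form an $R$-basis; it is written as the $n\times m$ matrix of its column vectors. Two characteristic maps are D-J equivalent if one is obtained from the other by left multiplication by an element of $GL_n(R)$ (row operations). For a face $\sigma$ of $L$ and a characteristic map $\lambda$, the projection $\operatorname{proj}_\sigma\lambda$ is the characteristic map on $\operatorname{link}_L\sigma$ given by $w\mapsto[\lambda(w)]\in R^n/\langle\lambda(u):u\in\sigma\rangle\cong R^{n-|\sigma|}$, well defined up to D-J equivalence. The wedge $\operatorname{wed}_vK=(I\star\operatorname{link}_K\{v\})\cup(\partial I\star(K\setminus\{v\}))$, where $I$ is a $1$-simplex on new vertices $v_1,v_2$ replacing $v$; for $a\ne b$ in $\{1,2\}$, $\operatorname{link}_{\operatorname{wed}_vK}\{v_a\}$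 is identified with $K$ via $v_b\mapsto v$ and $i\mapsto i$ for $i\ne v$. The pre-diagram $D'(K)$ is the edge-colored multigraph (loops allowed) whose vertices are the D-J classes of $R$-characteristic maps over $K$, and which has an edge colored $v$ between classes $\lambda_1,\lambda_2$ iff there exists an $R$-characteristic map $\Lambda$ over $\operatorname{wed}_vK$ with $\operatorname{proj}_{v_1}\Lambda=\lambda_1$ and $\operatorname{proj}_{v_2}\Lambda=\lambda_2$ (up to D-J equivalence, via the identifications above). For an $R$-characteristic map $\lambda$ over $K$ and $v\in[m]$, choose $g\in GL_n(R)$ such that the $v$-th column of $g\lambda$ is the first standard basis vector $e_1$; then $\operatorname{Pr}(\lambda,v)$ is the $(n-1)\times(m-1)$ matrix obtained from $g\lambda$ by deleting the first row and the $v$-th column (well defined up to left multiplication by $GL_{n-1}(R)$). *)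

theory Defs
  imports "HOL-Analysis.Analysis" "HOL-Library.Z2" "Jordan_Normal_Form.Matrix"
begin

(* Vertex set [m] is represented as {0..<m}; vertex i corresponds to column i. *)

definition simplicial_complex_on :: "nat \<Rightarrow> nat set set \<Rightarrow> bool" where
  "simplicial_complex_on m K \<longleftrightarrow>
     (\<forall>\<sigma>\<in>K. \<sigma> \<subseteq> {..<m}) \<and> (\<forall>\<sigma>\<in>K. \<forall>\<tau>. \<tau> \<subseteq> \<sigma> \<longrightarrow> \<tau> \<in> K) \<and> (\<forall>i<m. {i} \<in> K)"

definition link :: "nat set set \<Rightarrow> nat set \<Rightarrow> nat set set" where
  "link K \<sigma> = {\<tau> \<in> K. \<tau> \<inter> \<sigma> = {} \<and> \<tau> \<union> \<sigma> \<in> K}"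

definition geom_realization :: "nat set set \<Rightarrow> (nat \<Rightarrow> 'e::euclidean_space) \<Rightarrow> bool" where
  "geom_realization K x \<longleftrightarrow>
     (\<forall>\<sigma>\<in>K. inj_on x \<sigma> \<and> \<not> affine_dependent (x ` \<sigma>)) \<and>
     (\<forall>\<sigma>\<in>K. \<forall>\<tau>\<in>K. convex hull (x ` \<sigma>) \<inter> convex hull (x ` \<tau>) = convex hull (x ` (\<sigma> \<inter> \<tau>)))"

definition polyhedron :: "nat set set \<Rightarrow> (nat \<Rightarrow> 'e::euclidean_space) \<Rightarrow> 'e set" where
  "polyhedron K x = (\<Union>\<sigma>\<in>K. convex hull (x ` \<sigma>))"

(* K is a (DIM('e)-1)-dimensional star-shaped simplicial sphere on [m]:
   a simplicial complex on [m] whose polyhedron is homeomorphic to S^{DIM('e)-1},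
   having a geometric realization in R^{DIM('e)} and a point p such that every ray
   from p meets |K| in exactly one point. *)
definition star_shaped_sphere :: "'e::euclidean_space itself \<Rightarrow> nat \<Rightarrow> nat set set \<Rightarrow> bool" where
  "star_shaped_sphere T m K \<longleftrightarrow> simplicial_complex_on m K \<and>
     (\<exists>x::nat \<Rightarrow> 'e. geom_realization K x \<and> polyhedron K x homeomorphic sphere (0::'e) 1) \<and>
     (\<exists>(x::nat \<Rightarrow> 'e) p. geom_realization K x \<and>
        (\<forall>d. d \<noteq> 0 \<longrightarrow> card ({p + t *\<^sub>R d | t. t \<ge> 0} \<inter> polyhedron K x) = 1))"

definition R_basis :: "nat \<Rightarrow> (nat \<Rightarrow> 'a::comm_ring_1 Matrix.vec) \<Rightarrow> nat set \<Rightarrow> bool" where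
  "R_basis n f S \<longleftrightarrow> finite S \<and> (\<forall>i\<in>S. f i \<in> carrier_vec n) \<and>
     (\<forall>y\<in>carrier_vec n. \<exists>!c::nat \<Rightarrow> 'a. (\<forall>i. i \<notin> S \<longrightarrow> c i = 0) \<and>
        (\<forall>k<n. y $ k = (\<Sum>i\<in>S. c i * f i $ k)))"

definition char_map :: "nat \<Rightarrow> nat \<Rightarrow> nat set set \<Rightarrow> 'a::comm_ring_1 mat \<Rightarrow> bool" where
  "char_map n m L l \<longleftrightarrow> l \<in> carrier_mat n m \<and>
     (\<forall>\<sigma>\<in>L. card \<sigma> = n \<longrightarrow> R_basis n (col l) \<sigma>)"

definition DJ_equiv :: "nat \<Rightarrow> 'a::comm_ring_1 mat \<Rightarrow> 'a mat \<Rightarrow> bool" where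
  "DJ_equiv n A B \<longleftrightarrow> A \<in> carrier_mat n (dim_col A) \<and>
     (\<exists>g\<in>carrier_mat n n. invertible_mat g \<and> g * A = B)"

(* wedge of K at v: v_1 is v itself, v_2 is the new vertex m *)
definition wedge :: "nat set set \<Rightarrow> nat \<Rightarrow> nat \<Rightarrow> nat set set" where
  "wedge K v m =
     {\<sigma> \<union> \<tau> | \<sigma> \<tau>. \<sigma> \<subseteq> {v, m} \<and> \<tau> \<in> link K {v}} \<union>
     {\<sigma> \<union> \<tau> | \<sigma> \<tau>. \<sigma> \<in> {{}, {v}, {m}} \<and> \<tau> \<in> K \<and> v \<notin> \<tau>}"

(* mu is (a representative of) proj_{u} Lam, an (N-1) x (M-1) matrix, where column j of mu
   corresponds to the vertex r j of the link: w \<mapsto> [Lam(w)] in R^N / <Lam(u)> \<cong> R^(N-1),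
   the identification being given by a surjective linear map F with kernel <Lam(u)>. *)
definition is_proj :: "nat \<Rightarrow> nat \<Rightarrow> 'a::comm_ring_1 mat \<Rightarrow> nat \<Rightarrow> (nat \<Rightarrow> nat) \<Rightarrow> 'a mat \<Rightarrow> bool" where
  "is_proj N M Lam u r mu \<longleftrightarrow>
     (\<exists>F\<in>carrier_mat (N - 1) N.
        (\<forall>y\<in>carrier_vec (N - 1). \<exists>x\<in>carrier_vec N. F *\<^sub>v x = y) \<and>
        (\<forall>x\<in>carrier_vec N. F *\<^sub>v x = 0\<^sub>v (N - 1) \<longleftrightarrow> (\<exists>c. x = c \<cdot>\<^sub>v col Lam u)) \<and>
        mu = Matrix.mat (N - 1) (M - 1) (\<lambda>(i, j). (F * Lam) $$ (i, r j)))"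

definition pre_edge :: "nat \<Rightarrow> nat \<Rightarrow> nat set set \<Rightarrow> nat \<Rightarrow> 'a::comm_ring_1 mat \<Rightarrow> 'a mat \<Rightarrow> bool" where
  "pre_edge n m K v l1 l2 \<longleftrightarrow>
     (\<exists>Lam. char_map (n + 1) (m + 1) (wedge K v m) Lam \<and>
        (\<exists>mu. is_proj (n + 1) (m + 1) Lam v (\<lambda>j. if j = v then m else j) mu \<and> DJ_equiv n mu l1) \<and>
        (\<exists>mu. is_proj (n + 1) (m + 1) Lam m (\<lambda>j. j) mu \<and> DJ_equiv n mu l2))"

definition Pr_rel :: "nat \<Rightarrow> 'a::comm_ring_1 mat \<Rightarrow> nat \<Rightarrow> 'a mat \<Rightarrow> bool" where
  "Pr_rel n l v P \<longleftrightarrow>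
     (\<exists>g\<in>carrier_mat n n. invertible_mat g \<and> (g * l) $$ (0, v) = 1 \<and> (\<forall>i<n. i \<noteq> 0 \<longrightarrow> (g * l) $$ (i, v) = 0) \<and>
        P = Matrix.mat (n - 1) (dim_col l - 1) (\<lambda>(i, j). (g * l) $$ (i + 1, if j < v then j else j + 1)))"

definition Pr_equiv :: "nat \<Rightarrow> 'a::comm_ring_1 mat \<Rightarrow> 'a mat \<Rightarrow> nat \<Rightarrow> bool" where
  "Pr_equiv n l1 l2 v \<longleftrightarrow>
     (\<exists>P1 P2. Pr_rel n l1 v P1 \<and> Pr_rel n l2 v P2 \<and>
        (\<exists>h\<in>carrier_mat (n - 1) (n - 1). invertible_mat h \<and> h * P1 = P2))"

end

theory Submission
  imports Defs
begin

text \<open>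
  If \<open>Pr(\<lambda>\<^sub>1, v)\<close> and \<open>Pr(\<lambda>\<^sub>2, v)\<close> agree
  up to \<open>GL\<^sub>n\<^sub>-\<^sub>1(R)\<close>, normalize both maps so that column \<open>v\<close> is \<open>e\<^sub>0\<close> and all rows but the
  first coincide; stacking the first row of \<open>\<lambda>\<^sub>1\<close> on top of \<open>\<lambda>\<^sub>2\<close> and adding a column \<open>e\<^sub>0\<close> for
  the new vertex gives a characteristic map over the wedge with the required projections.
  Conversely, if \<open>\<Lambda>\<close> lives over the wedge, pick a facet \<open>\<rho>\<close> of \<open>K\<close> through \<open>v\<close> (it exists
  because \<open>K\<close> is a star-shaped sphere); the columns of \<open>\<Lambda>\<close> on \<open>\<rho> \<union> {v\<^sub>2}\<close> form a basis, and in
  that basis both projections, as well as both \<open>Pr\<close>'s, are read off from the same rows.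
\<close>

section \<open>Bases formed by columns\<close>

text \<open>\<open>G k j\<close> is the \<open>k\<close>-th coordinate of the \<open>j\<close>-th vector; working with bare functions
  instead of matrices lets rows be reindexed freely.\<close>

definition col_basis :: "nat \<Rightarrow> (nat \<Rightarrow> nat \<Rightarrow> 'a::comm_ring_1) \<Rightarrow> nat set \<Rightarrow> bool" where
  "col_basis N G S \<longleftrightarrow> (\<forall>y. \<exists>c. \<forall>k<N. y k = (\<Sum>j\<in>S. c j * G k j)) \<and>
     (\<forall>c. (\<forall>k<N. (\<Sum>j\<in>S. c j * G k j) = 0) \<longrightarrow> (\<forall>j\<in>S. c j = 0))"

lemma col_basis_span: "col_basis N G S \<Longrightarrow> \<exists>c. \<forall>k<N. y k = (\<Sum>j\<in>S. c j * G k j)"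
  unfolding col_basis_def by blast

lemma col_basis_indep:
  "col_basis N G S \<Longrightarrow> (\<And>k. k < N \<Longrightarrow> (\<Sum>j\<in>S. c j * G k j) = 0) \<Longrightarrow> j \<in> S \<Longrightarrow> c j = 0"
  unfolding col_basis_def by blast

lemma col_basisI:
  "(\<And>y. \<exists>c. \<forall>k<N. y k = (\<Sum>j\<in>S. c j * G k j)) \<Longrightarrow>
   (\<And>c. \<forall>k<N. (\<Sum>j\<in>S. c j * G k j) = 0 \<Longrightarrow> \<forall>j\<in>S. c j = 0) \<Longrightarrow> col_basis N G S"
  unfolding col_basis_def by blast

lemma sum_col_eq_sum_index:
  assumes "l \<in> carrier_mat N M" "S \<subseteq> {..<M}" "k < N"
  shows "(\<Sum>i\<in>S. c i * col l i $ k) = (\<Sum>i\<in>S. c i * l $$ (k, i))"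
  using assms by (intro sum.cong) auto

lemma col_basis_if_R_basis:
  assumes l: "l \<in> carrier_mat N M" and S: "S \<subseteq> {..<M}" and R: "R_basis N (col l) S"
  shows "col_basis N (\<lambda>k j. l $$ (k, j)) S"
proof (rule col_basisI)
  fix y :: "nat \<Rightarrow> 'a"
  have "vec N y \<in> carrier_vec N" by simp
  then obtain c where "\<forall>k<N. vec N y $ k = (\<Sum>i\<in>S. c i * col l i $ k)"
    using R unfolding R_basis_def by blast
  thus "\<exists>c. \<forall>k<N. y k = (\<Sum>j\<in>S. c j * l $$ (k, j))"
    using sum_col_eq_sum_index[OF l S] by auto
next
  fix c :: "nat \<Rightarrow> 'a" assume c: "\<forall>k<N. (\<Sum>j\<in>S. c j * l $$ (k, j)) = 0"
  define c0 where "c0 i = (if i \<in> S then c i else 0)" for i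
  let ?P = "\<lambda>e. (\<forall>i. i \<notin> S \<longrightarrow> e i = 0) \<and>
    (\<forall>k<N. (0\<^sub>v N :: 'a vec) $ k = (\<Sum>i\<in>S. e i * col l i $ k))"
  have "(0\<^sub>v N :: 'a vec) \<in> carrier_vec N" by simp
  hence uniq: "\<exists>!e. ?P e" using R unfolding R_basis_def by blast
  have P_c0: "?P c0"
  proof (intro conjI allI impI)
    fix k assume k: "k < N"
    have "(\<Sum>i\<in>S. c0 i * col l i $ k) = (\<Sum>i\<in>S. c i * l $$ (k, i))"
      unfolding sum_col_eq_sum_index[OF l S k] by (intro sum.cong) (auto simp: c0_def)
    thus "(0\<^sub>v N :: 'a vec) $ k = (\<Sum>i\<in>S. c0 i * col l i $ k)" using c k by simp
  qed (simp add: c0_def)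
  have "?P (\<lambda>_. 0)" by simp
  hence "c0 = (\<lambda>_. 0)" using the1_equality[of ?P, OF uniq P_c0] the1_equality[of ?P, OF uniq] by simp
  thus "\<forall>j\<in>S. c j = 0" unfolding c0_def by (metis (full_types))
qed

lemma R_basis_if_col_basis:
  assumes l: "l \<in> carrier_mat N M" and S: "S \<subseteq> {..<M}" and fin: "finite S"
    and b: "col_basis N (\<lambda>k j. l $$ (k, j)) S"
  shows "R_basis N (col l) S"
  unfolding R_basis_def
proof (intro conjI ballI)
  show "\<And>i. i \<in> S \<Longrightarrow> col l i \<in> carrier_vec N" using l by auto
  fix y :: "'a vec" assume y: "y \<in> carrier_vec N"
  obtain c where c: "\<forall>k<N. y $ k = (\<Sum>j\<in>S. c j * l $$ (k, j))"
    using col_basis_span[OF b] by blast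
  define c0 where "c0 i = (if i \<in> S then c i else 0)" for i
  have c0: "(\<Sum>j\<in>S. c0 j * l $$ (k, j)) = (\<Sum>j\<in>S. c j * l $$ (k, j))" for k
    by (intro sum.cong) (auto simp: c0_def)
  show "\<exists>!c. (\<forall>i. i \<notin> S \<longrightarrow> c i = 0) \<and> (\<forall>k<N. y $ k = (\<Sum>i\<in>S. c i * col l i $ k))"
  proof (rule ex1I)
    show "(\<forall>i. i \<notin> S \<longrightarrow> c0 i = 0) \<and> (\<forall>k<N. y $ k = (\<Sum>i\<in>S. c0 i * col l i $ k))"
    proof (intro conjI allI impI)
      fix k assume k: "k < N"
      have "y $ k = (\<Sum>j\<in>S. c j * l $$ (k, j))" using c k by blast
      also have "\<dots> = (\<Sum>i\<in>S. c0 i * col l i $ k)"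
        unfolding c0 sum_col_eq_sum_index[OF l S k] ..
      finally show "y $ k = (\<Sum>i\<in>S. c0 i * col l i $ k)" .
    qed (simp add: c0_def)
  next
    fix e assume e: "(\<forall>i. i \<notin> S \<longrightarrow> e i = 0) \<and> (\<forall>k<N. y $ k = (\<Sum>i\<in>S. e i * col l i $ k))"
    have "(\<Sum>j\<in>S. (e j - c0 j) * l $$ (k, j)) = 0" if k: "k < N" for k
    proof -
      have "(\<Sum>j\<in>S. (e j - c0 j) * l $$ (k, j))
          = (\<Sum>j\<in>S. e j * l $$ (k, j)) - (\<Sum>j\<in>S. c j * l $$ (k, j))"
        unfolding c0[symmetric] by (simp add: algebra_simps sum_subtractf)
      also have "\<dots> = y $ k - y $ k"
        using e c k sum_col_eq_sum_index[OF l S k, of e] by simp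
      finally show ?thesis by simp
    qed
    hence "\<forall>j\<in>S. e j - c0 j = 0" using col_basis_indep[OF b, of "\<lambda>j. e j - c0 j"] by blast
    thus "e = c0" using e by (auto simp: c0_def)
  qed
qed (use fin in simp)

lemma R_basis_iff_col_basis:
  assumes "l \<in> carrier_mat N M" "S \<subseteq> {..<M}"
  shows "R_basis N (col l) S \<longleftrightarrow> finite S \<and> col_basis N (\<lambda>k j. l $$ (k, j)) S"
proof
  assume R: "R_basis N (col l) S"
  thus "finite S \<and> col_basis N (\<lambda>k j. l $$ (k, j)) S"
    using col_basis_if_R_basis[OF assms] unfolding R_basis_def by blast
qed (use R_basis_if_col_basis[OF assms] in blast)

definition skip :: "nat \<Rightarrow> nat \<Rightarrow> nat" where
  "skip r k = (if k < r then k else Suc k)"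

lemma skip_neq [simp]: "skip r k \<noteq> r" "r \<noteq> skip r k"
  by (auto simp: skip_def)

lemma skip_less: "k < N \<Longrightarrow> skip r k < Suc N"
  by (auto simp: skip_def)

lemma skip_0 [simp]: "skip 0 k = Suc k"
  by (simp add: skip_def)

lemma skip_surj:
  assumes "k < Suc N" "k \<noteq> r" "r \<le> N"
  shows "\<exists>k'<N. k = skip r k'"
proof (cases "k < r")
  case True thus ?thesis using assms by (intro exI[of _ k]) (auto simp: skip_def)
next
  case False thus ?thesis using assms by (intro exI[of _ "k - 1"]) (auto simp: skip_def)
qed

lemma col_basis_insert_unit_col:
  assumes b: "col_basis N G S" and fin: "finite S" and u: "u \<notin> S" and r: "r \<le> N"
    and row: "\<forall>k<N. \<forall>j\<in>S. G' (skip r k) j = G k j"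
    and colu: "\<forall>k<Suc N. G' k u = (if k = r then 1 else 0)"
  shows "col_basis (Suc N) G' (insert u S)"
proof (rule col_basisI)
  fix y :: "nat \<Rightarrow> 'a"
  obtain c where c: "\<forall>k<N. y (skip r k) = (\<Sum>j\<in>S. c j * G k j)"
    using col_basis_span[OF b, of "\<lambda>k. y (skip r k)"] by auto
  define c' where "c' = c(u := y r - (\<Sum>j\<in>S. c j * G' r j))"
  have "(\<Sum>j\<in>S. c' j * G' k j) = (\<Sum>j\<in>S. c j * G' k j)" for k
    using u by (intro sum.cong) (auto simp: c'_def)
  hence sum_c': "(\<Sum>j\<in>insert u S. c' j * G' k j) = c' u * G' k u + (\<Sum>j\<in>S. c j * G' k j)" for k
    using fin u by simp
  have "y k = (\<Sum>j\<in>insert u S. c' j * G' k j)" if k: "k < Suc N" for k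
  proof (cases "k = r")
    case True thus ?thesis using sum_c' colu k by (simp add: c'_def)
  next
    case False
    then obtain k' where k': "k' < N" "k = skip r k'" using skip_surj k r by blast
    have "(\<Sum>j\<in>S. c j * G' k j) = (\<Sum>j\<in>S. c j * G k' j)"
      using row k' by (intro sum.cong) auto
    thus ?thesis using sum_c' colu k False c k' by simp
  qed
  thus "\<exists>c. \<forall>k<Suc N. y k = (\<Sum>j\<in>insert u S. c j * G' k j)" by blast
next
  fix c :: "nat \<Rightarrow> 'a" assume z: "\<forall>k<Suc N. (\<Sum>j\<in>insert u S. c j * G' k j) = 0"
  have sum_c: "(\<Sum>j\<in>insert u S. c j * G' k j) = c u * G' k u + (\<Sum>j\<in>S. c j * G' k j)" for k
    using fin u by simp
  have zS: "\<forall>j\<in>S. c j = 0"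
  proof
    fix j assume j: "j \<in> S"
    show "c j = 0"
    proof (rule col_basis_indep[OF b _ j])
      fix k assume k: "k < N"
      have "(\<Sum>j\<in>S. c j * G' (skip r k) j) = (\<Sum>j\<in>S. c j * G k j)"
        using row k by (intro sum.cong) auto
      moreover have "(\<Sum>j\<in>insert u S. c j * G' (skip r k) j) = 0"
        using z skip_less[OF k, of r] by blast
      moreover have "G' (skip r k) u = 0" using colu skip_less[OF k, of r] by simp
      ultimately show "(\<Sum>j\<in>S. c j * G k j) = 0" using sum_c by simp
    qed
  qed
  have "c u = 0" using z[rule_format, of r] r sum_c colu zS by simp
  thus "\<forall>j\<in>insert u S. c j = 0" using zS by blast
qed

lemma col_basis_remove_unit_col:
  assumes b: "col_basis (Suc N) G' (insert u S)" and fin: "finite S" and u: "u \<notin> S"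
    and r: "r \<le> N"
    and row: "\<forall>k<N. \<forall>j\<in>S. G' (skip r k) j = G k j"
    and colu: "\<forall>k<Suc N. G' k u = (if k = r then 1 else 0)"
  shows "col_basis N G S"
proof (rule col_basisI)
  fix z :: "nat \<Rightarrow> 'a"
  obtain c where c: "\<forall>k<Suc N. z (if k < r then k else k - 1) = (\<Sum>j\<in>insert u S. c j * G' k j)"
    using col_basis_span[OF b, of "\<lambda>k. z (if k < r then k else k - 1)"] by auto
  have "z k = (\<Sum>j\<in>S. c j * G k j)" if k: "k < N" for k
  proof -
    have k_back: "(if skip r k < r then skip r k else skip r k - 1) = k" by (simp add: skip_def)
    have "z (if skip r k < r then skip r k else skip r k - 1)
        = (\<Sum>j\<in>insert u S. c j * G' (skip r k) j)"
      using c skip_less[OF k, of r] by blast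
    hence "z k = (\<Sum>j\<in>insert u S. c j * G' (skip r k) j)" unfolding k_back .
    also have "\<dots> = (\<Sum>j\<in>S. c j * G' (skip r k) j)"
      using fin u colu skip_less[OF k] by simp
    also have "\<dots> = (\<Sum>j\<in>S. c j * G k j)"
      using row k by (intro sum.cong) auto
    finally show ?thesis .
  qed
  thus "\<exists>c. \<forall>k<N. z k = (\<Sum>j\<in>S. c j * G k j)" by blast
next
  fix c :: "nat \<Rightarrow> 'a" assume z: "\<forall>k<N. (\<Sum>j\<in>S. c j * G k j) = 0"
  \<comment> \<open>extend \<open>c\<close> by the coefficient of \<open>u\<close> that kills the new coordinate \<open>r\<close>\<close>
  define c' where "c' = c(u := - (\<Sum>j\<in>S. c j * G' r j))"
  have "(\<Sum>j\<in>S. c' j * G' k j) = (\<Sum>j\<in>S. c j * G' k j)" for k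
    using u by (intro sum.cong) (auto simp: c'_def)
  hence sum_c': "(\<Sum>j\<in>insert u S. c' j * G' k j) = c' u * G' k u + (\<Sum>j\<in>S. c j * G' k j)" for k
    using fin u by simp
  have c'_zero: "c' j = 0" if j: "j \<in> S" for j
  proof (rule col_basis_indep[OF b _ insertI2[OF j]])
    fix k assume k: "k < Suc N"
    show "(\<Sum>j\<in>insert u S. c' j * G' k j) = 0"
    proof (cases "k = r")
      case True thus ?thesis using sum_c' colu k by (simp add: c'_def)
    next
      case False
      then obtain k' where k': "k' < N" "k = skip r k'" using skip_surj k r by blast
      have "(\<Sum>j\<in>S. c j * G' k j) = (\<Sum>j\<in>S. c j * G k' j)"
        using row k' by (intro sum.cong) auto
      thus ?thesis using sum_c' colu k False z k' by simp
    qed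
  qed
  show "\<forall>j\<in>S. c j = 0"
  proof
    fix j assume j: "j \<in> S"
    hence "c' j = c j" using u by (auto simp: c'_def)
    thus "c j = 0" using c'_zero[OF j] by simp
  qed
qed

section \<open>Matrices over a commutative ring\<close>

lemma index_mult_mat_sum:
  assumes "A \<in> carrier_mat a b" "B \<in> carrier_mat b c" "k < a" "j < c"
  shows "(A * B) $$ (k, j) = (\<Sum>p<b. A $$ (k, p) * B $$ (p, j))"
  using assms by (auto simp: scalar_prod_def atLeast0LessThan intro!: sum.cong)

lemma sum_index_mult_mat:
  assumes "A \<in> carrier_mat a b" "B \<in> carrier_mat b c" "k < a"
  shows "(\<Sum>q<c. (A * B) $$ (k, q) * x q) = (\<Sum>p<b. A $$ (k, p) * (\<Sum>q<c. B $$ (p, q) * x q))"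
proof -
  have "(\<Sum>q<c. (A * B) $$ (k, q) * x q) = (\<Sum>q<c. (\<Sum>p<b. A $$ (k, p) * B $$ (p, q)) * x q)"
    by (intro sum.cong refl) (simp add: index_mult_mat_sum[OF assms])
  also have "\<dots> = (\<Sum>q<c. \<Sum>p<b. A $$ (k, p) * (B $$ (p, q) * x q))"
    by (simp add: sum_distrib_right mult.assoc)
  also have "\<dots> = (\<Sum>p<b. A $$ (k, p) * (\<Sum>q<c. B $$ (p, q) * x q))"
    by (subst sum.swap) (simp add: sum_distrib_left)
  finally show ?thesis .
qed

lemma sum_index_one_mat:
  assumes k: "k < N"
  shows "(\<Sum>q<N. (1\<^sub>m N :: 'a::comm_ring_1 mat) $$ (k, q) * x q) = x k"
proof -
  have "(\<Sum>q<N. (1\<^sub>m N :: 'a mat) $$ (k, q) * x q) = (\<Sum>q<N. if k = q then x q else 0)"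
    using k by (intro sum.cong) auto
  thus ?thesis using k by simp
qed

lemma invertible_matI:
  "A \<in> carrier_mat N N \<Longrightarrow> B \<in> carrier_mat N N \<Longrightarrow> A * B = 1\<^sub>m N \<Longrightarrow> B * A = 1\<^sub>m N \<Longrightarrow>
   invertible_mat A"
  unfolding invertible_mat_def inverts_mat_def by auto

lemma invertible_matE:
  fixes g :: "'a::comm_ring_1 mat"
  assumes "g \<in> carrier_mat N N" "invertible_mat g"
  obtains h where "h \<in> carrier_mat N N" "g * h = 1\<^sub>m N" "h * g = 1\<^sub>m N"
proof -
  obtain h where h: "g * h = 1\<^sub>m N" "h * g = 1\<^sub>m (dim_row h)"
    using assms unfolding invertible_mat_def inverts_mat_def by auto
  have "dim_col h = N" "dim_row h = N"
    using arg_cong[OF h(1), of dim_col] arg_cong[OF h(2), of dim_col] assms(1) by auto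
  thus ?thesis using that h by auto
qed

lemma invertible_mult_mat:
  fixes A B :: "'a::comm_ring_1 mat"
  assumes A: "A \<in> carrier_mat N N" "invertible_mat A" and B: "B \<in> carrier_mat N N" "invertible_mat B"
  shows "invertible_mat (A * B)"
proof -
  obtain A' where A': "A' \<in> carrier_mat N N" "A * A' = 1\<^sub>m N" "A' * A = 1\<^sub>m N"
    using invertible_matE[OF A] by blast
  obtain B' where B': "B' \<in> carrier_mat N N" "B * B' = 1\<^sub>m N" "B' * B = 1\<^sub>m N"
    using invertible_matE[OF B] by blast
  have "(A * B) * (B' * A') = A * (B * (B' * A'))" using A B A' B' by (intro assoc_mult_mat) auto
  also have "B * (B' * A') = (B * B') * A'" using A B A' B' by (intro assoc_mult_mat[symmetric]) auto
  finally have AB: "(A * B) * (B' * A') = 1\<^sub>m N" using A' B' by simp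
  have "(B' * A') * (A * B) = B' * (A' * (A * B))" using A B A' B' by (intro assoc_mult_mat) auto
  also have "A' * (A * B) = (A' * A) * B" using A B A' B' by (intro assoc_mult_mat[symmetric]) auto
  finally have BA: "(B' * A') * (A * B) = 1\<^sub>m N" using B B' A' by simp
  show ?thesis using A B A' B' AB BA by (intro invertible_matI[of _ N "B' * A'"]) auto
qed

lemma mult_mat_vec_smult:
  fixes A :: "'a::comm_ring_1 mat"
  assumes "A \<in> carrier_mat nr nc" "x \<in> carrier_vec nc"
  shows "A *\<^sub>v (k \<cdot>\<^sub>v x) = k \<cdot>\<^sub>v (A *\<^sub>v x)"
  by (rule eq_vecI) (use assms in auto)

lemma mult_mat_vec_unit_vec:
  fixes A :: "'a::comm_ring_1 mat"
  assumes "A \<in> carrier_mat nr nc" "j < nc"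
  shows "A *\<^sub>v unit_vec nc j = col A j"
  by (rule eq_vecI) (use assms in auto)

lemma invertible_mat_if_bij:
  fixes A :: "'a::comm_ring_1 mat"
  assumes A: "A \<in> carrier_mat N N"
    and surj: "\<forall>y\<in>carrier_vec N. \<exists>x\<in>carrier_vec N. A *\<^sub>v x = y"
    and inj: "\<forall>x\<in>carrier_vec N. A *\<^sub>v x = 0\<^sub>v N \<longrightarrow> x = 0\<^sub>v N"
  shows "invertible_mat A"
proof -
  define X where "X j = (SOME x. x \<in> carrier_vec N \<and> A *\<^sub>v x = unit_vec N j)" for j
  have X: "X j \<in> carrier_vec N \<and> A *\<^sub>v X j = unit_vec N j" for j
    unfolding X_def by (rule someI_ex) (use surj unit_vec_carrier in blast)
  define B where "B = Matrix.mat N N (\<lambda>(i, j). X j $ i)"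
  have B: "B \<in> carrier_mat N N" by (simp add: B_def)
  have col_B: "col B j = X j" if "j < N" for j
    by (rule eq_vecI) (use that X[of j] in \<open>auto simp: B_def\<close>)
  have AB: "A * B = 1\<^sub>m N"
  proof (rule eq_matI)
    fix i j assume "i < dim_row (1\<^sub>m N :: 'a mat)" "j < dim_col (1\<^sub>m N :: 'a mat)"
    hence i: "i < N" and j: "j < N" by auto
    have "(A * B) $$ (i, j) = (A *\<^sub>v X j) $ i" using A B i j col_B[OF j] by simp
    thus "(A * B) $$ (i, j) = 1\<^sub>m N $$ (i, j)" using X[of j] i j by simp
  qed (use A B in auto)
  have "B * A = 1\<^sub>m N"
  proof (rule eq_matI)
    fix i j assume "i < dim_row (1\<^sub>m N :: 'a mat)" "j < dim_col (1\<^sub>m N :: 'a mat)"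
    hence i: "i < N" and j: "j < N" by auto
    have cA: "col A j \<in> carrier_vec N" using A by auto
    have "A *\<^sub>v (B *\<^sub>v col A j - unit_vec N j) = (A * B) *\<^sub>v col A j - A *\<^sub>v unit_vec N j"
      using A B cA by (simp add: mult_minus_distrib_mat_vec)
    also have "\<dots> = 0\<^sub>v N"
      unfolding AB mult_mat_vec_unit_vec[OF A j] using cA by (intro eq_vecI) auto
    finally have "B *\<^sub>v col A j - unit_vec N j = 0\<^sub>v N"
      using inj B cA by (meson minus_carrier_vec mult_mat_vec_carrier unit_vec_carrier)
    hence "(B *\<^sub>v col A j) $ i = unit_vec N j $ i"
      using i B cA by (metis index_minus_vec(1) index_zero_vec(1) carrier_vecD
          mult_mat_vec_carrier right_minus_eq unit_vec_carrier)
    thus "(B * A) $$ (i, j) = 1\<^sub>m N $$ (i, j)" using A B i j by simp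
  qed (use A B in auto)
  thus ?thesis using invertible_matI[OF A B AB] by blast
qed

lemma col_basis_mult_invertible:
  assumes g: "g \<in> carrier_mat N N" "invertible_mat g" and l: "l \<in> carrier_mat N M"
    and S: "S \<subseteq> {..<M}" and b: "col_basis N (\<lambda>k j. l $$ (k, j)) S"
  shows "col_basis N (\<lambda>k j. (g * l) $$ (k, j)) S"
proof -
  obtain h where h: "h \<in> carrier_mat N N" "g * h = 1\<^sub>m N" "h * g = 1\<^sub>m N"
    using invertible_matE[OF g] by blast
  have coords: "(\<Sum>j\<in>S. c j * (g * l) $$ (k, j)) = (\<Sum>p<N. g $$ (k, p) * (\<Sum>j\<in>S. c j * l $$ (p, j)))"
    if k: "k < N" for c k
  proof -
    have "(\<Sum>j\<in>S. c j * (g * l) $$ (k, j)) = (\<Sum>j\<in>S. \<Sum>p<N. g $$ (k, p) * (c j * l $$ (p, j)))"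
      using S by (intro sum.cong refl) (auto simp: index_mult_mat_sum[OF g(1) l k] sum_distrib_left ac_simps)
    also have "\<dots> = (\<Sum>p<N. g $$ (k, p) * (\<Sum>j\<in>S. c j * l $$ (p, j)))"
      by (subst sum.swap) (simp add: sum_distrib_left)
    finally show ?thesis .
  qed
  show ?thesis
  proof (rule col_basisI)
    fix y :: "nat \<Rightarrow> 'a"
    obtain c where c: "\<forall>p<N. (\<Sum>q<N. h $$ (p, q) * y q) = (\<Sum>j\<in>S. c j * l $$ (p, j))"
      using col_basis_span[OF b, of "\<lambda>p. \<Sum>q<N. h $$ (p, q) * y q"] by auto
    have "y k = (\<Sum>j\<in>S. c j * (g * l) $$ (k, j))" if k: "k < N" for k
    proof -
      have "(\<Sum>j\<in>S. c j * (g * l) $$ (k, j)) = (\<Sum>p<N. g $$ (k, p) * (\<Sum>q<N. h $$ (p, q) * y q))"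
        using coords[OF k] c by simp
      also have "\<dots> = (\<Sum>q<N. (g * h) $$ (k, q) * y q)"
        using sum_index_mult_mat[OF g(1) h(1) k] by simp
      also have "\<dots> = y k" unfolding h(2) by (rule sum_index_one_mat[OF k])
      finally show ?thesis by simp
    qed
    thus "\<exists>c. \<forall>k<N. y k = (\<Sum>j\<in>S. c j * (g * l) $$ (k, j))" by blast
  next
    fix c :: "nat \<Rightarrow> 'a" assume z: "\<forall>k<N. (\<Sum>j\<in>S. c j * (g * l) $$ (k, j)) = 0"
    define w where "w p = (\<Sum>j\<in>S. c j * l $$ (p, j))" for p
    have "w p = 0" if p: "p < N" for p
    proof -
      have "w p = (\<Sum>q<N. (h * g) $$ (p, q) * w q)" unfolding h(3) by (rule sum_index_one_mat[OF p, symmetric])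
      also have "\<dots> = (\<Sum>k<N. h $$ (p, k) * (\<Sum>q<N. g $$ (k, q) * w q))"
        using sum_index_mult_mat[OF h(1) g(1) p] by simp
      also have "\<dots> = 0" using z coords by (simp add: w_def)
      finally show "w p = 0" .
    qed
    thus "\<forall>j\<in>S. c j = 0" using col_basis_indep[OF b, of c] unfolding w_def by blast
  qed
qed

lemma char_map_mult_invertible:
  assumes K: "simplicial_complex_on m K" and l: "char_map n m K l"
    and g: "g \<in> carrier_mat n n" "invertible_mat g"
  shows "char_map n m K (g * l)"
proof -
  have lc: "l \<in> carrier_mat n m" using l unfolding char_map_def by blast
  have "R_basis n (col (g * l)) \<sigma>" if "\<sigma> \<in> K" "card \<sigma> = n" for \<sigma>
  proof -
    have S: "\<sigma> \<subseteq> {..<m}" using K that(1) unfolding simplicial_complex_on_def by blast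
    have "finite \<sigma> \<and> col_basis n (\<lambda>k j. l $$ (k, j)) \<sigma>"
      using l that R_basis_iff_col_basis[OF lc S] unfolding char_map_def by blast
    thus ?thesis using R_basis_iff_col_basis[OF mult_carrier_mat[OF g(1) lc] S]
      col_basis_mult_invertible[OF g lc S] by blast
  qed
  thus ?thesis using g lc unfolding char_map_def by auto
qed

lemma DJ_equiv_mult_invertible:
  assumes g: "g \<in> carrier_mat n n" "invertible_mat g" and l: "l \<in> carrier_mat n m"
  shows "DJ_equiv n (g * l) l"
proof -
  obtain h where h: "h \<in> carrier_mat n n" "g * h = 1\<^sub>m n" "h * g = 1\<^sub>m n"
    using invertible_matE[OF g] by blast
  have "h * (g * l) = l" using g h l by (simp add: assoc_mult_mat[of _ n n _ n _ m, symmetric])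
  moreover have "invertible_mat h" using invertible_matI[OF h(1) g(1) h(3,2)] .
  ultimately show ?thesis using g l h unfolding DJ_equiv_def by auto
qed

section \<open>Deleting and inserting a coordinate\<close>

definition delete_row_mat :: "nat \<Rightarrow> nat \<Rightarrow> 'a::comm_ring_1 mat" where
  "delete_row_mat r n = Matrix.mat n (Suc n) (\<lambda>(i, k). if k = skip r i then 1 else 0)"

definition insert_zero_mat :: "nat \<Rightarrow> nat \<Rightarrow> 'a::comm_ring_1 mat" where
  "insert_zero_mat r n = Matrix.mat (Suc n) n (\<lambda>(k, i). if k = skip r i then 1 else 0)"

lemma dim_delete_row_mat [simp]:
  "dim_row (delete_row_mat r n) = n" "dim_col (delete_row_mat r n) = Suc n"
  by (simp_all add: delete_row_mat_def)

lemma dim_insert_zero_mat [simp]: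
  "dim_row (insert_zero_mat r n) = Suc n" "dim_col (insert_zero_mat r n) = n"
  by (simp_all add: insert_zero_mat_def)

lemma delete_row_mat_carrier [simp]: "delete_row_mat r n \<in> carrier_mat n (Suc n)"
  by (simp add: carrier_matI)

lemma insert_zero_mat_carrier [simp]: "insert_zero_mat r n \<in> carrier_mat (Suc n) n"
  by (simp add: carrier_matI)

lemma sum_indicator_mult:
  assumes "(a::nat) < N"
  shows "(\<Sum>k\<in>{0..<N}. (if k = a then 1 else 0) * (f k :: 'a::comm_ring_1)) = f a"
proof -
  have "(\<Sum>k\<in>{0..<N}. (if k = a then 1 else 0) * f k) = (\<Sum>k\<in>{0..<N}. if k = a then f k else 0)"
    by (intro sum.cong) auto
  thus ?thesis using assms by simp
qed

lemma delete_row_mat_mult_vec: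
  assumes "i < n" "x \<in> carrier_vec (Suc n)"
  shows "(delete_row_mat r n *\<^sub>v x) $ i = x $ skip r i"
  using assms skip_less[OF assms(1), of r]
  by (simp add: delete_row_mat_def scalar_prod_def sum_indicator_mult)

lemma index_delete_row_mat_mult:
  assumes "X \<in> carrier_mat (Suc n) c" "i < n" "j < c"
  shows "(delete_row_mat r n * X) $$ (i, j) = X $$ (skip r i, j)"
  using assms skip_less[OF assms(2), of r]
  by (simp add: delete_row_mat_def scalar_prod_def sum_indicator_mult)

lemma delete_row_mat_surj:
  assumes y: "y \<in> carrier_vec n"
  shows "\<exists>x\<in>carrier_vec (Suc n). (delete_row_mat r n :: 'a::comm_ring_1 mat) *\<^sub>v x = y"
proof
  let ?x = "Matrix.vec (Suc n) (\<lambda>k. if k = r then 0 else y $ (if k < r then k else k - 1))"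
  show "?x \<in> carrier_vec (Suc n)" by simp
  show "(delete_row_mat r n :: 'a mat) *\<^sub>v ?x = y"
  proof (rule eq_vecI)
    fix i assume "i < dim_vec y"
    hence i: "i < n" using y by simp
    have "(delete_row_mat r n *\<^sub>v ?x) $ i = ?x $ skip r i" by (rule delete_row_mat_mult_vec[OF i]) simp
    thus "(delete_row_mat r n *\<^sub>v ?x) $ i = y $ i" using skip_less[OF i, of r] by (simp add: skip_def)
  qed (use y in simp)
qed

lemma delete_row_mat_kernel:
  assumes r: "r \<le> n" and x: "x \<in> carrier_vec (Suc n)"
  shows "(delete_row_mat r n :: 'a::comm_ring_1 mat) *\<^sub>v x = 0\<^sub>v n \<longleftrightarrow>
    (\<exists>c. x = c \<cdot>\<^sub>v unit_vec (Suc n) r)"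
proof
  assume z: "(delete_row_mat r n :: 'a mat) *\<^sub>v x = 0\<^sub>v n"
  have "x $ k = (x $ r \<cdot>\<^sub>v unit_vec (Suc n) r) $ k" if k: "k < Suc n" for k
  proof (cases "k = r")
    case False
    then obtain k' where k': "k' < n" "k = skip r k'" using skip_surj[OF k False r] by blast
    have "x $ k = (delete_row_mat r n *\<^sub>v x) $ k'" using delete_row_mat_mult_vec[OF k'(1) x] k'(2) by simp
    also have "\<dots> = 0" using z k'(1) by simp
    finally show ?thesis using k False by (simp add: unit_vec_def)
  qed (use k in simp)
  hence "x = x $ r \<cdot>\<^sub>v unit_vec (Suc n) r" using x by (intro eq_vecI) auto
  thus "\<exists>c. x = c \<cdot>\<^sub>v unit_vec (Suc n) r" by blast
next
  assume "\<exists>c. x = c \<cdot>\<^sub>v unit_vec (Suc n) r"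
  then obtain c where c: "x = c \<cdot>\<^sub>v unit_vec (Suc n) r" by blast
  show "(delete_row_mat r n :: 'a mat) *\<^sub>v x = 0\<^sub>v n"
  proof (rule eq_vecI)
    fix i assume "i < dim_vec (0\<^sub>v n :: 'a vec)"
    hence i: "i < n" by simp
    show "(delete_row_mat r n *\<^sub>v x) $ i = 0\<^sub>v n $ i"
      using delete_row_mat_mult_vec[OF i x] c skip_less[OF i, of r] i r by simp
  qed simp
qed

lemma insert_zero_mat_mult_vec:
  assumes z: "z \<in> carrier_vec n" and k: "k < Suc n" and r: "r \<le> n"
  shows "((insert_zero_mat r n :: 'a::comm_ring_1 mat) *\<^sub>v z) $ k =
    (if k = r then 0 else z $ (if k < r then k else k - 1))"
proof -
  have e: "((insert_zero_mat r n :: 'a mat) *\<^sub>v z) $ k = (\<Sum>l\<in>{0..<n}. (if k = skip r l then 1 else 0) * z $ l)"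
    using z k by (auto simp: insert_zero_mat_def scalar_prod_def intro!: sum.cong)
  show ?thesis
  proof (cases "k = r")
    case True
    have "(\<Sum>l\<in>{0..<n}. (if k = skip r l then 1 else 0) * z $ l) = 0"
      using True by (intro sum.neutral) auto
    thus ?thesis using e True by simp
  next
    case False
    define k' where "k' = (if k < r then k else k - 1)"
    have "k' < n" using k False r by (auto simp: k'_def)
    moreover have "(k = skip r l) = (l = k')" for l using False by (auto simp: k'_def skip_def)
    ultimately show ?thesis using e False by (simp add: sum_indicator_mult k'_def)
  qed
qed

lemma delete_row_insert_zero:
  assumes "r \<le> n" "z \<in> carrier_vec n"
  shows "(delete_row_mat r n :: 'a::comm_ring_1 mat) *\<^sub>v (insert_zero_mat r n *\<^sub>v z) = z"
proof (rule eq_vecI)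
  fix i assume "i < dim_vec z"
  hence i: "i < n" using assms(2) by simp
  have iz: "insert_zero_mat r n *\<^sub>v z \<in> carrier_vec (Suc n)"
    by (rule mult_mat_vec_carrier[OF insert_zero_mat_carrier assms(2)])
  show "(delete_row_mat r n *\<^sub>v (insert_zero_mat r n *\<^sub>v z)) $ i = z $ i"
    using delete_row_mat_mult_vec[OF i iz, of r]
      insert_zero_mat_mult_vec[OF assms(2) skip_less[OF i, of r] assms(1)]
    by (simp add: skip_def)
qed (use assms in simp)

lemma insert_zero_delete_row:
  assumes x: "x \<in> carrier_vec (Suc n)" and r: "r \<le> n"
  shows "x = (insert_zero_mat r n :: 'a::comm_ring_1 mat) *\<^sub>v (delete_row_mat r n *\<^sub>v x)
    + x $ r \<cdot>\<^sub>v unit_vec (Suc n) r"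
proof (rule eq_vecI)
  fix k assume "k < dim_vec ((insert_zero_mat r n :: 'a mat) *\<^sub>v (delete_row_mat r n *\<^sub>v x)
    + x $ r \<cdot>\<^sub>v unit_vec (Suc n) r)"
  hence k: "k < Suc n" by simp
  have dx: "(delete_row_mat r n :: 'a mat) *\<^sub>v x \<in> carrier_vec n"
    by (rule mult_mat_vec_carrier[OF delete_row_mat_carrier x])
  show "x $ k = ((insert_zero_mat r n :: 'a mat) *\<^sub>v (delete_row_mat r n *\<^sub>v x)
    + x $ r \<cdot>\<^sub>v unit_vec (Suc n) r) $ k"
  proof (cases "k = r")
    case False
    define k' where "k' = (if k < r then k else k - 1)"
    have k': "k' < n" and "skip r k' = k" using k False r by (auto simp: k'_def skip_def)
    thus ?thesis using insert_zero_mat_mult_vec[OF dx k r] False delete_row_mat_mult_vec[OF k' x, of r] k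
      by (simp add: k'_def unit_vec_def)
  qed (use k insert_zero_mat_mult_vec[OF dx k r] in simp)
qed (use x in simp)

definition one_block_mat :: "'a::comm_ring_1 mat \<Rightarrow> nat \<Rightarrow> 'a mat" where
  "one_block_mat h n = Matrix.mat (Suc n) (Suc n)
     (\<lambda>(i, j). if i = 0 \<and> j = 0 then 1 else if i = 0 \<or> j = 0 then 0 else h $$ (i - 1, j - 1))"

lemma one_block_mat_carrier [simp]: "one_block_mat h n \<in> carrier_mat (Suc n) (Suc n)"
  by (simp add: one_block_mat_def)

lemma index_one_block_mat_mult_0:
  assumes "A \<in> carrier_mat (Suc n) c" "j < c"
  shows "(one_block_mat h n * A) $$ (0, j) = A $$ (0, j)"
proof -
  have "(one_block_mat h n * A) $$ (0, j) = (\<Sum>p<Suc n. one_block_mat h n $$ (0, p) * A $$ (p, j))"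
    by (rule index_mult_mat_sum[OF one_block_mat_carrier assms(1) _ assms(2)]) (use assms in simp)
  also have "\<dots> = A $$ (0, j)" by (simp only: sum.lessThan_Suc_shift) (simp add: one_block_mat_def)
  finally show ?thesis .
qed

lemma index_one_block_mat_mult_Suc:
  assumes "A \<in> carrier_mat (Suc n) c" "j < c" "i < n"
  shows "(one_block_mat h n * A) $$ (Suc i, j) = (\<Sum>p<n. h $$ (i, p) * A $$ (Suc p, j))"
proof -
  have "(one_block_mat h n * A) $$ (Suc i, j) = (\<Sum>p<Suc n. one_block_mat h n $$ (Suc i, p) * A $$ (p, j))"
    by (rule index_mult_mat_sum[OF one_block_mat_carrier assms(1) _ assms(2)]) (use assms in simp)
  also have "\<dots> = (\<Sum>p<n. h $$ (i, p) * A $$ (Suc p, j))"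
    using assms(3) by (simp only: sum.lessThan_Suc_shift) (simp add: one_block_mat_def)
  finally show ?thesis .
qed

lemma one_block_mat_mult:
  assumes h: "h \<in> carrier_mat n n" and h': "h' \<in> carrier_mat n n"
  shows "one_block_mat h n * one_block_mat h' n = one_block_mat (h * h') n"
proof (rule eq_matI)
  fix i j assume "i < dim_row (one_block_mat (h * h') n)" "j < dim_col (one_block_mat (h * h') n)"
  hence i: "i < Suc n" and j: "j < Suc n" by (auto simp: one_block_mat_def)
  show "(one_block_mat h n * one_block_mat h' n) $$ (i, j) = one_block_mat (h * h') n $$ (i, j)"
  proof (cases i)
    case 0 thus ?thesis using index_one_block_mat_mult_0[OF one_block_mat_carrier[of h' n] j, of h] j
      by (simp add: one_block_mat_def)
  next
    case (Suc i')
    hence i': "i' < n" using i by simp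
    have "(one_block_mat h n * one_block_mat h' n) $$ (i, j)
        = (\<Sum>p<n. h $$ (i', p) * one_block_mat h' n $$ (Suc p, j))"
      using index_one_block_mat_mult_Suc[OF one_block_mat_carrier j i'] Suc by simp
    also have "\<dots> = one_block_mat (h * h') n $$ (i, j)"
    proof (cases j)
      case (Suc j')
      hence j': "j' < n" using j by simp
      have "(\<Sum>p<n. h $$ (i', p) * one_block_mat h' n $$ (Suc p, j)) = (\<Sum>p<n. h $$ (i', p) * h' $$ (p, j'))"
        using Suc j' by (intro sum.cong) (auto simp: one_block_mat_def)
      also have "\<dots> = (h * h') $$ (i', j')" by (rule index_mult_mat_sum[OF h h' i' j', symmetric])
      finally show ?thesis using \<open>i = Suc i'\<close> Suc i j by (simp add: one_block_mat_def)
    qed (use Suc i in \<open>simp add: one_block_mat_def\<close>)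
    finally show ?thesis .
  qed
qed (auto simp: one_block_mat_def)

lemma invertible_one_block_mat:
  assumes h: "h \<in> carrier_mat n n" "invertible_mat h"
  shows "invertible_mat (one_block_mat h n)"
proof -
  obtain h' where h': "h' \<in> carrier_mat n n" "h * h' = 1\<^sub>m n" "h' * h = 1\<^sub>m n"
    using invertible_matE[OF h] by blast
  have one: "one_block_mat (1\<^sub>m n) n = (1\<^sub>m (Suc n) :: 'a mat)"
    by (rule eq_matI) (auto simp: one_block_mat_def)
  show ?thesis
    by (rule invertible_matI[OF one_block_mat_carrier one_block_mat_carrier[of h' n]])
      (simp_all add: one_block_mat_mult h h' one)
qed

section \<open>From equal projections to a characteristic map over the wedge\<close>

lemma wedge_face_cases:
  assumes "\<sigma> \<in> wedge K v m"
  shows "\<exists>\<tau>\<in>K. v \<notin> \<tau> \<and> (\<sigma> = \<tau> \<or> \<sigma> = insert v \<tau> \<or> \<sigma> = insert m \<tau> \<or>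
    (\<sigma> = insert m (insert v \<tau>) \<and> insert v \<tau> \<in> K))"
proof -
  from assms consider
      (link) s \<tau> where "\<sigma> = s \<union> \<tau>" "s \<subseteq> {v, m}" "\<tau> \<in> K" "v \<notin> \<tau>" "insert v \<tau> \<in> K"
    | (star) s \<tau> where "\<sigma> = s \<union> \<tau>" "s \<in> {{}, {v}, {m}}" "\<tau> \<in> K" "v \<notin> \<tau>"
    unfolding wedge_def link_def by auto
  thus ?thesis
  proof cases
    case (link s \<tau>)
    have "s = {} \<or> s = {v} \<or> s = {m} \<or> s = {v, m}" using link(2) by blast
    thus ?thesis using link by (intro bexI[of _ \<tau>]) auto
  qed (auto intro: bexI)
qed

lemma wedge_facet_cases:
  assumes K: "simplicial_complex_on m K" and dim: "\<forall>\<sigma>\<in>K. card \<sigma> \<le> n"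
    and \<sigma>: "\<sigma> \<in> wedge K v m" "card \<sigma> = Suc n" and v: "v < m"
  obtains (both) \<tau> where "\<sigma> = insert m (insert v \<tau>)" "insert v \<tau> \<in> K" "v \<notin> \<tau>" "card (insert v \<tau>) = n"
    | (first) \<tau> where "\<sigma> = insert v \<tau>" "\<tau> \<in> K" "v \<notin> \<tau>" "card \<tau> = n"
    | (second) \<tau> where "\<sigma> = insert m \<tau>" "\<tau> \<in> K" "v \<notin> \<tau>" "card \<tau> = n"
proof -
  obtain \<tau> where \<tau>: "\<tau> \<in> K" "v \<notin> \<tau>" and cases: "\<sigma> = \<tau> \<or> \<sigma> = insert v \<tau> \<or> \<sigma> = insert m \<tau> \<or>
      (\<sigma> = insert m (insert v \<tau>) \<and> insert v \<tau> \<in> K)"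
    using wedge_face_cases[OF \<sigma>(1)] by blast
  have sub: "\<tau> \<subseteq> {..<m}" using K \<tau>(1) unfolding simplicial_complex_on_def by blast
  hence fin: "finite \<tau>" and m: "m \<notin> \<tau>" by (auto intro: finite_subset)
  have le: "card \<tau> \<le> n" using dim \<tau>(1) by blast
  from cases show thesis
  proof (elim disjE conjE)
    assume "\<sigma> = \<tau>" thus thesis using le \<sigma>(2) by simp
  next
    assume "\<sigma> = insert v \<tau>" thus thesis using first \<tau> \<sigma>(2) fin by simp
  next
    assume "\<sigma> = insert m \<tau>" thus thesis using second \<tau> \<sigma>(2) fin m by simp
  next
    assume "\<sigma> = insert m (insert v \<tau>)" "insert v \<tau> \<in> K"
    thus thesis using both \<tau> \<sigma>(2) fin m v by simp
  qed
qed

text \<open>The characteristic map over the wedge whose projections at \<open>v\<close> and at the new vertex \<open>m\<close>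
  are \<open>A\<close> and \<open>B\<close>, provided column \<open>v\<close> of both is \<open>e\<^sub>0\<close> and their rows below the first agree.\<close>

definition wedge_mat :: "nat \<Rightarrow> nat \<Rightarrow> nat \<Rightarrow> 'a::comm_ring_1 mat \<Rightarrow> 'a mat \<Rightarrow> 'a mat" where
  "wedge_mat n m v A B = Matrix.mat (Suc n) (Suc m) (\<lambda>(i, j).
     if j = m then (if i = 0 then 1 else 0)
     else if i = 0 then (if j = v then 0 else A $$ (0, j)) else B $$ (i - 1, j))"

locale wedge_pair =
  fixes n m v :: nat and A B :: "'a::comm_ring_1 mat"
  assumes A: "A \<in> carrier_mat (Suc n) m" and B: "B \<in> carrier_mat (Suc n) m" and v: "v < m"
    and A_0v: "A $$ (0, v) = 1" and B_0v: "B $$ (0, v) = 1"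
    and B_Suc_v: "\<forall>i<n. B $$ (Suc i, v) = 0"
    and A_Suc_eq_B_Suc: "\<forall>i<n. \<forall>j<m. A $$ (Suc i, j) = B $$ (Suc i, j)"
begin

abbreviation "Lam \<equiv> wedge_mat (Suc n) m v A B"

lemma Lam_carrier: "Lam \<in> carrier_mat (Suc (Suc n)) (Suc m)"
  by (simp add: wedge_mat_def)

lemma index_Lam_0: "j < m \<Longrightarrow> Lam $$ (0, j) = (if j = v then 0 else A $$ (0, j))"
  by (simp add: wedge_mat_def)

lemma index_Lam_Suc: "i < Suc n \<Longrightarrow> j < m \<Longrightarrow> Lam $$ (Suc i, j) = B $$ (i, j)"
  by (simp add: wedge_mat_def)

lemma index_Lam_new: "k < Suc (Suc n) \<Longrightarrow> Lam $$ (k, m) = (if k = 0 then 1 else 0)"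
  by (simp add: wedge_mat_def)

lemma index_A_v: "k < Suc n \<Longrightarrow> A $$ (k, v) = (if k = 0 then 1 else 0)"
  using A_0v B_Suc_v A_Suc_eq_B_Suc v by (cases k) auto

lemma index_B_v: "k < Suc n \<Longrightarrow> B $$ (k, v) = (if k = 0 then 1 else 0)"
  using B_0v B_Suc_v by (cases k) auto

lemma index_Lam_v: "k < Suc (Suc n) \<Longrightarrow> Lam $$ (k, v) = (if k = 1 then 1 else 0)"
  using index_Lam_0[OF v] index_Lam_Suc[OF _ v] index_B_v by (cases k) auto

lemma index_Lam_skip_1:
  assumes "k < Suc n" "j < m" "j \<noteq> v"
  shows "Lam $$ (skip 1 k, j) = A $$ (k, j)"
  using assms index_Lam_0 index_Lam_Suc A_Suc_eq_B_Suc by (cases k) (auto simp: skip_def)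

lemma char_map_wedge_mat:
  assumes K: "simplicial_complex_on m K" and dim: "\<forall>\<sigma>\<in>K. card \<sigma> \<le> Suc n"
    and cA: "char_map (Suc n) m K A" and cB: "char_map (Suc n) m K B"
  shows "char_map (Suc (Suc n)) (Suc m) (wedge K v m) Lam"
  unfolding char_map_def
proof (intro conjI ballI impI)
  show "Lam \<in> carrier_mat (Suc (Suc n)) (Suc m)" by (rule Lam_carrier)
  have sub: "\<tau> \<subseteq> {..<m}" and fin: "finite \<tau>" if "\<tau> \<in> K" for \<tau>
    using K that unfolding simplicial_complex_on_def by (auto intro: finite_subset)
  have bA: "col_basis (Suc n) (\<lambda>k j. A $$ (k, j)) \<tau>" and bB: "col_basis (Suc n) (\<lambda>k j. B $$ (k, j)) \<tau>"
    if "\<tau> \<in> K" "card \<tau> = Suc n" for \<tau>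
    using cA cB that R_basis_iff_col_basis[OF A sub] R_basis_iff_col_basis[OF B sub]
    unfolding char_map_def by blast+
  fix \<sigma> assume \<sigma>: "\<sigma> \<in> wedge K v m" "card \<sigma> = Suc (Suc n)"
  have "\<sigma> \<subseteq> {..<Suc m} \<and> col_basis (Suc (Suc n)) (\<lambda>k j. Lam $$ (k, j)) \<sigma>"
    using K dim \<sigma> v
  proof (cases rule: wedge_facet_cases)
    case (both \<tau>)
    have \<tau>: "finite \<tau>" "\<tau> \<subseteq> {..<m}" "m \<notin> insert v \<tau>" using sub[OF both(2)] fin[OF both(2)] by auto
    \<comment> \<open>pass from the basis \<open>{v} \<union> \<tau>\<close> of \<open>A\<close> to \<open>\<tau>\<close> (rows \<open>\<ge> 1\<close>) and back to \<open>{v} \<union> \<tau>\<close> for \<open>B\<close>\<close>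
    have "col_basis n (\<lambda>k j. A $$ (Suc k, j)) \<tau>"
      using col_basis_remove_unit_col[OF bA[OF both(2,4)] \<tau>(1) both(3), of 0] index_A_v by simp
    hence "col_basis (Suc n) (\<lambda>k j. B $$ (k, j)) (insert v \<tau>)"
    proof (rule col_basis_insert_unit_col[OF _ \<tau>(1) both(3), of _ _ 0])
      show "\<forall>k<n. \<forall>j\<in>\<tau>. B $$ (skip 0 k, j) = A $$ (Suc k, j)"
        using A_Suc_eq_B_Suc \<tau>(2) by auto
    qed (use index_B_v in simp_all)
    hence "col_basis (Suc (Suc n)) (\<lambda>k j. Lam $$ (k, j)) (insert m (insert v \<tau>))"
    proof (rule col_basis_insert_unit_col[OF _ _ \<tau>(3), of _ _ 0])
      show "\<forall>k<Suc n. \<forall>j\<in>insert v \<tau>. Lam $$ (skip 0 k, j) = B $$ (k, j)"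
        using index_Lam_Suc \<tau>(2) v by auto
    qed (use \<tau>(1) index_Lam_new in simp_all)
    thus ?thesis using both(1) \<tau>(2) v by auto
  next
    case (first \<tau>)
    have "col_basis (Suc (Suc n)) (\<lambda>k j. Lam $$ (k, j)) (insert v \<tau>)"
    proof (rule col_basis_insert_unit_col[OF bA[OF first(2,4)] fin[OF first(2)] first(3), of 1])
      show "\<forall>k<Suc n. \<forall>j\<in>\<tau>. Lam $$ (skip 1 k, j) = A $$ (k, j)"
        using index_Lam_skip_1 sub[OF first(2)] first(3) by blast
    qed (use index_Lam_v in simp_all)
    thus ?thesis using first(1) sub[OF first(2)] v by auto
  next
    case (second \<tau>)
    have \<tau>: "\<tau> \<subseteq> {..<m}" "m \<notin> \<tau>" using sub[OF second(2)] by auto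
    have "col_basis (Suc (Suc n)) (\<lambda>k j. Lam $$ (k, j)) (insert m \<tau>)"
      using col_basis_insert_unit_col[OF bB[OF second(2,4)] fin[OF second(2)] \<tau>(2), of 0]
        index_Lam_Suc index_Lam_new \<tau>(1) by (auto simp: subset_eq)
    thus ?thesis using second(1) \<tau>(1) by auto
  qed
  thus "R_basis (Suc (Suc n)) (col Lam) \<sigma>"
    using R_basis_iff_col_basis[OF Lam_carrier] finite_subset[of \<sigma> "{..<Suc m}"] by blast
qed

lemma col_Lam_v: "col Lam v = unit_vec (Suc (Suc n)) 1"
  using index_Lam_v v by (intro eq_vecI) (auto simp: wedge_mat_def)

lemma col_Lam_new: "col Lam m = unit_vec (Suc (Suc n)) 0"
  by (intro eq_vecI) (auto simp: wedge_mat_def)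

lemma is_proj_delete_row:
  assumes "r \<le> Suc n" "col Lam u = unit_vec (Suc (Suc n)) r"
    and "\<forall>i<Suc n. \<forall>j<m. Lam $$ (skip r i, f j) = C $$ (i, j)" "\<forall>j<m. f j < Suc m"
    and "C \<in> carrier_mat (Suc n) m"
  shows "is_proj (Suc (Suc n)) (Suc m) Lam u f C"
  unfolding is_proj_def
proof (intro bexI[of _ "delete_row_mat r (Suc n)"] conjI ballI)
  show "\<exists>x\<in>carrier_vec (Suc (Suc n)). delete_row_mat r (Suc n) *\<^sub>v x = y"
    if "y \<in> carrier_vec (Suc (Suc n) - 1)" for y :: "'a vec"
    using delete_row_mat_surj that by simp
  show "(delete_row_mat r (Suc n) *\<^sub>v x = 0\<^sub>v (Suc (Suc n) - 1)) = (\<exists>c. x = c \<cdot>\<^sub>v col Lam u)"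
    if "x \<in> carrier_vec (Suc (Suc n))" for x :: "'a vec"
    using delete_row_mat_kernel[OF assms(1) that] assms(2) by simp
  show "C = Matrix.mat (Suc (Suc n) - 1) (Suc m - 1) (\<lambda>(i, j). (delete_row_mat r (Suc n) * Lam) $$ (i, f j))"
    using assms(3-5) index_delete_row_mat_mult[OF Lam_carrier] by (intro eq_matI) auto
qed simp

lemma is_proj_wedge_mat_v: "is_proj (Suc (Suc n)) (Suc m) Lam v (\<lambda>j. if j = v then m else j) A"
proof (rule is_proj_delete_row[OF _ col_Lam_v])
  show "\<forall>i<Suc n. \<forall>j<m. Lam $$ (skip 1 i, if j = v then m else j) = A $$ (i, j)"
  proof (intro allI impI)
    fix i j assume i: "i < Suc n" and j: "j < m"
    show "Lam $$ (skip 1 i, if j = v then m else j) = A $$ (i, j)"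
    proof (cases "j = v")
      case True
      thus ?thesis using index_Lam_new[OF skip_less[OF i, of 1]] index_A_v[OF i] by (simp add: skip_def)
    qed (use index_Lam_skip_1 i j in auto)
  qed
qed (use A in auto)

lemma is_proj_wedge_mat_new: "is_proj (Suc (Suc n)) (Suc m) Lam m (\<lambda>j. j) B"
  by (rule is_proj_delete_row[OF _ col_Lam_new]) (use B index_Lam_Suc in auto)

end

lemma Pr_relE:
  assumes "Pr_rel (Suc n) l v P" "l \<in> carrier_mat (Suc n) m"
  obtains g where "g \<in> carrier_mat (Suc n) (Suc n)" "invertible_mat g" "(g * l) $$ (0, v) = 1"
    "\<forall>i<n. (g * l) $$ (Suc i, v) = 0"
    "P = Matrix.mat n (m - 1) (\<lambda>(i, j). (g * l) $$ (i + 1, if j < v then j else j + 1))"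
proof -
  from assms(1) obtain g where g: "g \<in> carrier_mat (Suc n) (Suc n)" "invertible_mat g"
    "(g * l) $$ (0, v) = 1" "\<forall>i<Suc n. i \<noteq> 0 \<longrightarrow> (g * l) $$ (i, v) = 0"
    "P = Matrix.mat n (dim_col l - 1) (\<lambda>(i, j). (g * l) $$ (i + 1, if j < v then j else j + 1))"
    unfolding Pr_rel_def by auto
  have "\<forall>i<n. (g * l) $$ (Suc i, v) = 0" using g(4) by simp
  moreover have "dim_col l = m" using assms(2) by simp
  ultimately show thesis using that g by simp
qed

lemma index_one_block_mat_mult_Suc_eq:
  assumes h: "h \<in> carrier_mat n n" "h * P1 = P2"
    and A: "A \<in> carrier_mat (Suc n) m" and v: "v < m"
    and A_v: "\<forall>i<n. A $$ (Suc i, v) = 0" and B_v: "\<forall>i<n. B $$ (Suc i, v) = 0"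
    and P1: "P1 = Matrix.mat n (m - 1) (\<lambda>(i, j). A $$ (i + 1, if j < v then j else j + 1))"
    and P2: "P2 = Matrix.mat n (m - 1) (\<lambda>(i, j). B $$ (i + 1, if j < v then j else j + 1))"
    and i: "i < n" and j: "j < m"
  shows "(one_block_mat h n * A) $$ (Suc i, j) = B $$ (Suc i, j)"
proof -
  have row: "(one_block_mat h n * A) $$ (Suc i, j) = (\<Sum>p<n. h $$ (i, p) * A $$ (Suc p, j))"
    by (rule index_one_block_mat_mult_Suc[OF A j i])
  show ?thesis
  proof (cases "j = v")
    case True thus ?thesis unfolding row using A_v B_v i by simp
  next
    case False
    define j' where "j' = (if j < v then j else j - 1)"
    have j': "j' < m - 1" "(if j' < v then j' else j' + 1) = j" using j v False by (auto simp: j'_def)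
    have P1c: "P1 \<in> carrier_mat n (m - 1)" using P1 by simp
    have "(\<Sum>p<n. h $$ (i, p) * A $$ (Suc p, j)) = (\<Sum>p<n. h $$ (i, p) * P1 $$ (p, j'))"
      using P1 j' by (intro sum.cong) auto
    also have "\<dots> = (h * P1) $$ (i, j')" by (rule index_mult_mat_sum[OF h(1) P1c i j'(1), symmetric])
    also have "\<dots> = B $$ (Suc i, j)" using h(2) P2 i j' by simp
    finally show ?thesis unfolding row .
  qed
qed

lemma pre_edge_if_Pr_equiv:
  fixes l1 l2 :: "'a::comm_ring_1 mat"
  assumes K: "simplicial_complex_on m K" and dim: "\<forall>\<sigma>\<in>K. card \<sigma> \<le> Suc n" and v: "v < m"
    and c1: "char_map (Suc n) m K l1" and c2: "char_map (Suc n) m K l2"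
    and Pr: "Pr_equiv (Suc n) l1 l2 v"
  shows "pre_edge (Suc n) m K v l1 l2"
proof -
  have l1: "l1 \<in> carrier_mat (Suc n) m" and l2: "l2 \<in> carrier_mat (Suc n) m"
    using c1 c2 unfolding char_map_def by auto
  obtain P1 P2 h where Pr1: "Pr_rel (Suc n) l1 v P1" and Pr2: "Pr_rel (Suc n) l2 v P2"
    and h: "h \<in> carrier_mat n n" "invertible_mat h" "h * P1 = P2"
    using Pr unfolding Pr_equiv_def by auto
  obtain g1 where g1: "g1 \<in> carrier_mat (Suc n) (Suc n)" "invertible_mat g1" "(g1 * l1) $$ (0, v) = 1"
    "\<forall>i<n. (g1 * l1) $$ (Suc i, v) = 0"
    "P1 = Matrix.mat n (m - 1) (\<lambda>(i, j). (g1 * l1) $$ (i + 1, if j < v then j else j + 1))"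
    using Pr_relE[OF Pr1 l1] by blast
  obtain g2 where g2: "g2 \<in> carrier_mat (Suc n) (Suc n)" "invertible_mat g2" "(g2 * l2) $$ (0, v) = 1"
    "\<forall>i<n. (g2 * l2) $$ (Suc i, v) = 0"
    "P2 = Matrix.mat n (m - 1) (\<lambda>(i, j). (g2 * l2) $$ (i + 1, if j < v then j else j + 1))"
    using Pr_relE[OF Pr2 l2] by blast
  define G where "G = one_block_mat h n * g1"
  define A where "A = G * l1"
  define B where "B = g2 * l2"
  have G: "G \<in> carrier_mat (Suc n) (Suc n)" "invertible_mat G"
    unfolding G_def using invertible_mult_mat[OF _ invertible_one_block_mat[OF h(1,2)] g1(1,2)]
      mult_carrier_mat[OF one_block_mat_carrier g1(1)] by auto
  have g1l1: "g1 * l1 \<in> carrier_mat (Suc n) m" using g1(1) l1 by simp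
  have A_eq: "A = one_block_mat h n * (g1 * l1)"
    unfolding A_def G_def using g1(1) l1 by (simp add: assoc_mult_mat[OF one_block_mat_carrier g1(1) l1])
  have "wedge_pair n m v A B"
  proof
    show "A \<in> carrier_mat (Suc n) m" "B \<in> carrier_mat (Suc n) m"
      using G l1 g2 l2 by (auto simp: A_def B_def)
    show "A $$ (0, v) = 1" unfolding A_eq using index_one_block_mat_mult_0[OF g1l1 v] g1(3) by simp
    show "B $$ (0, v) = 1" "\<forall>i<n. B $$ (Suc i, v) = 0" using g2(3,4) by (simp_all add: B_def)
    show "\<forall>i<n. \<forall>j<m. A $$ (Suc i, j) = B $$ (Suc i, j)"
      unfolding A_eq B_def using index_one_block_mat_mult_Suc_eq[OF h(1,3) g1l1 v g1(4) g2(4) g1(5) g2(5)] by blast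
  qed (rule v)
  then interpret wedge_pair n m v A B .
  have "DJ_equiv (Suc n) A l1" unfolding A_def by (rule DJ_equiv_mult_invertible[OF G l1])
  moreover have "DJ_equiv (Suc n) B l2" unfolding B_def by (rule DJ_equiv_mult_invertible[OF g2(1,2) l2])
  moreover have "char_map (Suc (Suc n)) (Suc m) (wedge K v m) Lam"
    using char_map_wedge_mat[OF K dim] char_map_mult_invertible[OF K c1 G] char_map_mult_invertible[OF K c2 g2(1,2)]
    by (simp add: A_def B_def)
  ultimately show ?thesis
    unfolding pre_edge_def using is_proj_wedge_mat_v is_proj_wedge_mat_new by auto
qed

section \<open>From a characteristic map over the wedge to equal projections\<close>

lemma proj_map_factors_through_delete_row:
  fixes F W T :: "'a::comm_ring_1 mat"
  assumes F: "F \<in> carrier_mat n (Suc n)"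
    and F_surj: "\<forall>y\<in>carrier_vec n. \<exists>x\<in>carrier_vec (Suc n). F *\<^sub>v x = y"
    and F_ker: "\<forall>x\<in>carrier_vec (Suc n). F *\<^sub>v x = 0\<^sub>v n \<longleftrightarrow> (\<exists>c. x = c \<cdot>\<^sub>v a)"
    and W: "W \<in> carrier_mat (Suc n) (Suc n)" and T: "T \<in> carrier_mat (Suc n) (Suc n)"
    and WT: "W * T = 1\<^sub>m (Suc n)" and TW: "T * W = 1\<^sub>m (Suc n)"
    and r: "r \<le> n" and W_r: "col W r = a"
  obtains H where "H \<in> carrier_mat n n" "invertible_mat H"
    "\<forall>x\<in>carrier_vec (Suc n). F *\<^sub>v (W *\<^sub>v x) = H *\<^sub>v (delete_row_mat r n *\<^sub>v x)"
proof -
  let ?I = "insert_zero_mat r n :: 'a mat" and ?D = "delete_row_mat r n :: 'a mat"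
  define H where "H = F * (W * ?I)"
  have H: "H \<in> carrier_mat n n" unfolding H_def using F W by simp
  have H_vec: "H *\<^sub>v z = F *\<^sub>v (W *\<^sub>v (?I *\<^sub>v z))" if "z \<in> carrier_vec n" for z
    unfolding H_def using assoc_mult_mat_vec[OF F mult_carrier_mat[OF W insert_zero_mat_carrier] that]
      assoc_mult_mat_vec[OF W insert_zero_mat_carrier that] by simp
  have a: "a \<in> carrier_vec (Suc n)" using col_dim[of W r] W W_r by simp
  have We_r: "W *\<^sub>v unit_vec (Suc n) r = a" using mult_mat_vec_unit_vec[OF W, of r] r W_r by simp
  have TW_vec: "T *\<^sub>v (W *\<^sub>v p) = p" and WT_vec: "W *\<^sub>v (T *\<^sub>v p) = p" if "p \<in> carrier_vec (Suc n)" for p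
    using T W that WT TW by (simp_all flip: assoc_mult_mat_vec)
  have factor: "F *\<^sub>v (W *\<^sub>v x) = H *\<^sub>v (?D *\<^sub>v x)" if x: "x \<in> carrier_vec (Suc n)" for x
  proof -
    have Dx: "?D *\<^sub>v x \<in> carrier_vec n" by (rule mult_mat_vec_carrier[OF delete_row_mat_carrier x])
    have IDx: "?I *\<^sub>v (?D *\<^sub>v x) \<in> carrier_vec (Suc n)" by (rule mult_mat_vec_carrier[OF insert_zero_mat_carrier Dx])
    have "W *\<^sub>v x = W *\<^sub>v (?I *\<^sub>v (?D *\<^sub>v x)) + x $ r \<cdot>\<^sub>v a"
      using insert_zero_delete_row[OF x r] mult_add_distrib_mat_vec[OF W IDx, of "x $ r \<cdot>\<^sub>v unit_vec (Suc n) r"]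
        mult_mat_vec_smult[OF W, of "unit_vec (Suc n) r"] We_r by simp
    moreover have "F *\<^sub>v (x $ r \<cdot>\<^sub>v a) = 0\<^sub>v n" using F_ker a by auto
    ultimately show ?thesis
      using mult_add_distrib_mat_vec[OF F mult_mat_vec_carrier[OF W IDx], of "x $ r \<cdot>\<^sub>v a"] a F
        H_vec[OF Dx] right_zero_vec[OF mult_mat_vec_carrier[OF F mult_mat_vec_carrier[OF W IDx]]] by simp
  qed
  have "invertible_mat H"
  proof (rule invertible_mat_if_bij[OF H])
    show "\<forall>y\<in>carrier_vec n. \<exists>z\<in>carrier_vec n. H *\<^sub>v z = y"
    proof
      fix y :: "'a vec" assume "y \<in> carrier_vec n"
      then obtain x where x: "x \<in> carrier_vec (Suc n)" "F *\<^sub>v x = y" using F_surj by blast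
      have Tx: "T *\<^sub>v x \<in> carrier_vec (Suc n)" by (rule mult_mat_vec_carrier[OF T x(1)])
      have "H *\<^sub>v (?D *\<^sub>v (T *\<^sub>v x)) = y" using factor[OF Tx] WT_vec[OF x(1)] x(2) by simp
      thus "\<exists>z\<in>carrier_vec n. H *\<^sub>v z = y" using mult_mat_vec_carrier[OF delete_row_mat_carrier Tx] by blast
    qed
    show "\<forall>z\<in>carrier_vec n. H *\<^sub>v z = 0\<^sub>v n \<longrightarrow> z = 0\<^sub>v n"
    proof (intro ballI impI)
      fix z :: "'a vec" assume z: "z \<in> carrier_vec n" and Hz: "H *\<^sub>v z = 0\<^sub>v n"
      have Iz: "?I *\<^sub>v z \<in> carrier_vec (Suc n)" by (rule mult_mat_vec_carrier[OF insert_zero_mat_carrier z])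
      obtain c where c: "W *\<^sub>v (?I *\<^sub>v z) = c \<cdot>\<^sub>v a"
        using Hz H_vec[OF z] F_ker mult_mat_vec_carrier[OF W Iz] by auto
      have "W *\<^sub>v (c \<cdot>\<^sub>v unit_vec (Suc n) r) = c \<cdot>\<^sub>v a"
        using mult_mat_vec_smult[OF W, of "unit_vec (Suc n) r" c] We_r by simp
      hence "?I *\<^sub>v z = c \<cdot>\<^sub>v unit_vec (Suc n) r"
        using c TW_vec[OF Iz] TW_vec[of "c \<cdot>\<^sub>v unit_vec (Suc n) r"] by simp
      hence "?D *\<^sub>v (?I *\<^sub>v z) = 0\<^sub>v n" using delete_row_mat_kernel[OF r Iz] by blast
      thus "z = 0\<^sub>v n" using delete_row_insert_zero[OF r z] by simp
    qed
  qed
  thus thesis using that H factor by blast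
qed

lemma DJ_equiv_proj_eq_delete_row:
  fixes Lam T l mu :: "'a::comm_ring_1 mat"
  assumes proj: "is_proj (Suc n) M Lam u rm mu" and DJ: "DJ_equiv n mu l"
    and L: "Lam \<in> carrier_mat (Suc n) M" and rm: "\<forall>j<M - 1. rm j < M"
    and T: "T \<in> carrier_mat (Suc n) (Suc n)" "invertible_mat T"
    and r: "r \<le> n" and T_u: "T *\<^sub>v col Lam u = unit_vec (Suc n) r"
  obtains G where "G \<in> carrier_mat n n" "invertible_mat G"
    "\<forall>i<n. \<forall>j<M - 1. (G * l) $$ (i, j) = (T *\<^sub>v col Lam (rm j)) $ skip r i"
proof -
  obtain W where W: "W \<in> carrier_mat (Suc n) (Suc n)" and TW: "T * W = 1\<^sub>m (Suc n)"
    and WT: "W * T = 1\<^sub>m (Suc n)"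
    using invertible_matE[OF T] by blast
  have "col W r = W *\<^sub>v (T *\<^sub>v col Lam u)" using mult_mat_vec_unit_vec[OF W, of r] r T_u by simp
  also have "\<dots> = (W * T) *\<^sub>v col Lam u"
    using assoc_mult_mat_vec[OF W T(1), of "col Lam u"] col_dim[of Lam u] L by simp
  also have "\<dots> = col Lam u" using WT col_dim[of Lam u] L by simp
  finally have W_r: "col W r = col Lam u" .
  obtain F where F: "F \<in> carrier_mat n (Suc n)"
    "\<forall>y\<in>carrier_vec n. \<exists>x\<in>carrier_vec (Suc n). F *\<^sub>v x = y"
    "\<forall>x\<in>carrier_vec (Suc n). F *\<^sub>v x = 0\<^sub>v n \<longleftrightarrow> (\<exists>c. x = c \<cdot>\<^sub>v col Lam u)"
    and mu: "mu = Matrix.mat n (M - 1) (\<lambda>(i, j). (F * Lam) $$ (i, rm j))"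
    using proj unfolding is_proj_def diff_Suc_1 by blast
  obtain g where g: "g \<in> carrier_mat n n" "invertible_mat g" "g * mu = l"
    using DJ unfolding DJ_equiv_def by auto
  obtain H where H: "H \<in> carrier_mat n n" "invertible_mat H"
    "\<forall>x\<in>carrier_vec (Suc n). F *\<^sub>v (W *\<^sub>v x) = H *\<^sub>v (delete_row_mat r n *\<^sub>v x)"
    using proj_map_factors_through_delete_row[OF F W T(1) WT TW r W_r] by blast
  obtain H' where H': "H' \<in> carrier_mat n n" "H * H' = 1\<^sub>m n" "H' * H = 1\<^sub>m n"
    using invertible_matE[OF H(1,2)] by blast
  obtain g' where g': "g' \<in> carrier_mat n n" "g * g' = 1\<^sub>m n" "g' * g = 1\<^sub>m n"
    using invertible_matE[OF g(1,2)] by blast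
  have mu_c: "mu \<in> carrier_mat n (M - 1)" using mu by simp
  define G where "G = H' * g'"
  have G: "G \<in> carrier_mat n n" "invertible_mat G"
    unfolding G_def using H' g' invertible_mult_mat[OF H'(1) _ g'(1)]
      invertible_matI[OF H'(1) H(1) H'(3,2)] invertible_matI[OF g'(1) g(1) g'(3,2)] by auto
  have l_c: "l \<in> carrier_mat n (M - 1)" using g(1,3) mu_c by auto
  have "g' * l = (g' * g) * mu" unfolding g(3)[symmetric] by (rule assoc_mult_mat[OF g'(1) g(1) mu_c, symmetric])
  hence "g' * l = mu" using g'(3) mu_c by simp
  hence "G * l = H' * mu" unfolding G_def using assoc_mult_mat[OF H'(1) g'(1) l_c] by simp
  moreover have "(H' * mu) $$ (i, j) = (T *\<^sub>v col Lam (rm j)) $ skip r i"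
    if i: "i < n" and j: "j < M - 1" for i j
  proof -
    let ?c = "T *\<^sub>v col Lam (rm j)"
    have c: "?c \<in> carrier_vec (Suc n)" using mult_mat_vec_carrier[OF T(1), of "col Lam (rm j)"] col_dim[of Lam] L by simp
    have Dc: "delete_row_mat r n *\<^sub>v ?c \<in> carrier_vec n" by (rule mult_mat_vec_carrier[OF _ c]) simp
    have "col mu j = F *\<^sub>v (W *\<^sub>v ?c)"
      using WT T W L F(1) j rm mu by (intro eq_vecI) (auto simp flip: assoc_mult_mat_vec)
    also have "\<dots> = H *\<^sub>v (delete_row_mat r n *\<^sub>v ?c)" using H(3) c by blast
    finally have "H' *\<^sub>v col mu j = delete_row_mat r n *\<^sub>v ?c"
      using H(1) H'(1,3) Dc by (simp flip: assoc_mult_mat_vec)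
    thus ?thesis using H'(1) mu_c i j delete_row_mat_mult_vec[OF i c] by (metis index_mult_mat(1) index_mult_mat_vec carrier_matD)
  qed
  ultimately show thesis using that G by auto
qed

lemma obtain_enumeration_first_two:
  assumes "finite S" "a \<in> S" "b \<in> S" "a \<noteq> b"
  obtains \<pi> where "bij_betw \<pi> {..<card S} S" "\<pi> 0 = a" "\<pi> 1 = b"
proof -
  obtain ys where ys: "distinct ys" "set ys = S - {a, b}"
    using finite_distinct_list[of "S - {a, b}"] assms(1) by blast
  let ?xs = "a # b # ys"
  have xs: "distinct ?xs" "set ?xs = S" using assms ys by auto
  hence "length ?xs = card S" using distinct_card by metis
  hence "bij_betw ((!) ?xs) {..<card S} S" using xs by (intro bij_betw_nth) auto
  thus thesis using that by simp
qed

lemma invertible_mat_of_col_basis: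
  fixes G :: "nat \<Rightarrow> nat \<Rightarrow> 'a::comm_ring_1"
  assumes b: "col_basis N G S" and \<pi>: "bij_betw \<pi> {..<N} S"
  shows "invertible_mat (Matrix.mat N N (\<lambda>(k, l). G k (\<pi> l)))" (is "invertible_mat ?W")
proof (rule invertible_mat_if_bij)
  have W_vec: "(?W *\<^sub>v x) $ k = (\<Sum>l<N. x $ l * G k (\<pi> l))" if "x \<in> carrier_vec N" "k < N" for x k
    using that by (auto simp: scalar_prod_def atLeast0LessThan mult.commute intro!: sum.cong)
  have reindex: "(\<Sum>j\<in>S. f j) = (\<Sum>l<N. f (\<pi> l))" for f :: "nat \<Rightarrow> 'a"
    by (rule sum.reindex_bij_betw[OF \<pi>, symmetric])
  show "?W \<in> carrier_mat N N" by simp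
  show "\<forall>y\<in>carrier_vec N. \<exists>x\<in>carrier_vec N. ?W *\<^sub>v x = y"
  proof
    fix y :: "'a vec" assume y: "y \<in> carrier_vec N"
    obtain c where c: "\<forall>k<N. y $ k = (\<Sum>j\<in>S. c j * G k j)" using col_basis_span[OF b] by blast
    have "?W *\<^sub>v vec N (\<lambda>l. c (\<pi> l)) = y"
      using y c W_vec by (intro eq_vecI) (simp_all add: reindex)
    thus "\<exists>x\<in>carrier_vec N. ?W *\<^sub>v x = y" by (intro bexI) auto
  qed
  show "\<forall>x\<in>carrier_vec N. ?W *\<^sub>v x = 0\<^sub>v N \<longrightarrow> x = 0\<^sub>v N"
  proof (intro ballI impI)
    fix x :: "'a vec" assume x: "x \<in> carrier_vec N" and Wx: "?W *\<^sub>v x = 0\<^sub>v N"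
    define c where "c j = x $ inv_into {..<N} \<pi> j" for j
    have c_\<pi>: "c (\<pi> l) = x $ l" if "l < N" for l
      using that \<pi> by (simp add: c_def bij_betw_def)
    have "(\<Sum>j\<in>S. c j * G k j) = 0" if "k < N" for k
      using W_vec[OF x that] Wx that by (simp add: reindex c_\<pi>)
    hence c_0: "c j = 0" if "j \<in> S" for j using col_basis_indep[OF b _ that] by blast
    show "x = 0\<^sub>v N"
    proof (rule eq_vecI)
      fix l assume "l < dim_vec (0\<^sub>v N :: 'a vec)"
      hence l: "l < N" by simp
      hence "\<pi> l \<in> S" using bij_betwE[OF \<pi>] by blast
      thus "x $ l = 0\<^sub>v N $ l" using c_\<pi>[OF l] c_0 l by simp
    qed (use x in simp)
  qed
qed

lemma obtain_basis_change_to_unit_vecs: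
  fixes Lam :: "'a::comm_ring_1 mat"
  assumes L: "Lam \<in> carrier_mat N M" and b: "col_basis N (\<lambda>k j. Lam $$ (k, j)) S"
    and S: "finite S" "card S = N" "S \<subseteq> {..<M}" and ab: "a \<in> S" "b \<in> S" "a \<noteq> b"
  obtains T where "T \<in> carrier_mat N N" "invertible_mat T"
    "T *\<^sub>v col Lam a = unit_vec N 0" "T *\<^sub>v col Lam b = unit_vec N 1"
proof -
  obtain \<pi> where \<pi>: "bij_betw \<pi> {..<N} S" "\<pi> 0 = a" "\<pi> 1 = b"
    using obtain_enumeration_first_two[OF S(1) ab] S(2) by metis
  let ?W = "Matrix.mat N N (\<lambda>(k, l). Lam $$ (k, \<pi> l))"
  have W: "?W \<in> carrier_mat N N" by simp
  obtain T where T: "T \<in> carrier_mat N N" "?W * T = 1\<^sub>m N" "T * ?W = 1\<^sub>m N"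
    using invertible_matE[OF W invertible_mat_of_col_basis[OF b \<pi>(1)]] by blast
  have T_col: "T *\<^sub>v col Lam (\<pi> k) = unit_vec N k" if k: "k < N" for k
  proof -
    have "\<pi> k < M" using \<pi>(1) S(3) k by (auto dest: bij_betwE)
    hence "col Lam (\<pi> k) = ?W *\<^sub>v unit_vec N k"
      using L k by (simp add: mult_mat_vec_unit_vec[OF W k]) (intro eq_vecI, auto)
    also have "T *\<^sub>v \<dots> = (T * ?W) *\<^sub>v unit_vec N k" by (rule assoc_mult_mat_vec[OF T(1) W, symmetric]) simp
    finally show ?thesis using T(3) by simp
  qed
  have "1 < N" using S(1,2) ab card_mono[of S "{a, b}"] by simp
  thus thesis using that[OF T(1)] invertible_matI[OF T(1) W T(3,2)] T_col[of 0] T_col[of 1] \<pi>(2,3) by simp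
qed

lemma insert_new_vertex_mem_wedge:
  assumes K: "simplicial_complex_on m K" and \<rho>: "\<rho> \<in> K" "v \<in> \<rho>"
  shows "insert m \<rho> \<in> wedge K v m"
proof -
  have "\<rho> - {v} \<in> link K {v}"
    using K \<rho> unfolding simplicial_complex_on_def link_def by (auto simp: insert_absorb)
  moreover have "insert m \<rho> = {v, m} \<union> (\<rho> - {v})" using \<rho>(2) by auto
  ultimately show ?thesis unfolding wedge_def by blast
qed

lemma Pr_equiv_if_pre_edge:
  fixes l1 l2 :: "'a::comm_ring_1 mat"
  assumes K: "simplicial_complex_on m K" and \<rho>: "\<rho> \<in> K" "v \<in> \<rho>" "card \<rho> = Suc n" and v: "v < m"
    and l1: "l1 \<in> carrier_mat (Suc n) m" and l2: "l2 \<in> carrier_mat (Suc n) m"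
    and edge: "pre_edge (Suc n) m K v l1 l2"
  shows "Pr_equiv (Suc n) l1 l2 v"
proof -
  obtain Lam mu1 mu2 where Lam: "char_map (Suc (Suc n)) (Suc m) (wedge K v m) Lam"
    and proj1: "is_proj (Suc (Suc n)) (Suc m) Lam v (\<lambda>j. if j = v then m else j) mu1" "DJ_equiv (Suc n) mu1 l1"
    and proj2: "is_proj (Suc (Suc n)) (Suc m) Lam m (\<lambda>j. j) mu2" "DJ_equiv (Suc n) mu2 l2"
    using edge unfolding pre_edge_def by auto
  have L: "Lam \<in> carrier_mat (Suc (Suc n)) (Suc m)" using Lam unfolding char_map_def by auto
  \<comment> \<open>change basis to the columns of \<open>\<Lambda>\<close> on the facet \<open>\<rho> \<union> {v\<^sub>2}\<close> of the wedge\<close>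
  have \<rho>_sub: "\<rho> \<subseteq> {..<m}" using K \<rho>(1) unfolding simplicial_complex_on_def by blast
  hence fin: "finite \<rho>" and m: "m \<notin> \<rho>" by (auto intro: finite_subset)
  have \<sigma>: "insert m \<rho> \<in> wedge K v m" "card (insert m \<rho>) = Suc (Suc n)" "insert m \<rho> \<subseteq> {..<Suc m}"
    using insert_new_vertex_mem_wedge[OF K \<rho>(1,2)] \<rho>(3) fin m \<rho>_sub by auto
  have b: "col_basis (Suc (Suc n)) (\<lambda>k j. Lam $$ (k, j)) (insert m \<rho>)"
    using Lam \<sigma> R_basis_iff_col_basis[OF L \<sigma>(3)] unfolding char_map_def by blast
  have "finite (insert m \<rho>)" "m \<in> insert m \<rho>" "v \<in> insert m \<rho>" "m \<noteq> v"
    using fin \<rho>(2) v by auto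
  then obtain T where T: "T \<in> carrier_mat (Suc (Suc n)) (Suc (Suc n))" "invertible_mat T"
    and Tm: "T *\<^sub>v col Lam m = unit_vec (Suc (Suc n)) 0" and Tv: "T *\<^sub>v col Lam v = unit_vec (Suc (Suc n)) 1"
    using obtain_basis_change_to_unit_vecs[OF L b _ \<sigma>(2,3)] by blast
  obtain G1 where G1: "G1 \<in> carrier_mat (Suc n) (Suc n)" "invertible_mat G1"
    "\<forall>i<Suc n. \<forall>j<m. (G1 * l1) $$ (i, j) = (T *\<^sub>v col Lam (if j = v then m else j)) $ skip 1 i"
    by (rule DJ_equiv_proj_eq_delete_row[OF proj1 L _ T _ Tv]) auto
  obtain G2 where G2: "G2 \<in> carrier_mat (Suc n) (Suc n)" "invertible_mat G2"
    "\<forall>i<Suc n. \<forall>j<m. (G2 * l2) $$ (i, j) = (T *\<^sub>v col Lam j) $ skip 0 i"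
    by (rule DJ_equiv_proj_eq_delete_row[OF proj2 L _ T _ Tm]) auto
  \<comment> \<open>both \<open>Pr\<close>'s are the rows \<open>\<ge> 2\<close> of \<open>T \<Lambda>\<close> with column \<open>v\<close> removed\<close>
  define P where "P = Matrix.mat n (m - 1) (\<lambda>(i, j). (G1 * l1) $$ (i + 1, if j < v then j else j + 1))"
  have P_eq: "P = Matrix.mat n (m - 1) (\<lambda>(i, j). (G2 * l2) $$ (i + 1, if j < v then j else j + 1))"
    using G1(3) G2(3) v by (intro eq_matI) (auto simp: P_def skip_def)
  have "Pr_rel (Suc n) l1 v P"
    unfolding Pr_rel_def using G1 Tm v l1 by (intro bexI[of _ G1]) (auto simp: P_def skip_def)
  moreover have "Pr_rel (Suc n) l2 v P"
    unfolding Pr_rel_def using G2 Tv v l2 by (intro bexI[of _ G2]) (auto simp: P_eq)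
  moreover have "\<exists>h\<in>carrier_mat n n. invertible_mat h \<and> h * P = P"
    by (intro bexI[of _ "1\<^sub>m n"]) (auto simp: P_def intro: invertible_matI[of _ n "1\<^sub>m n"])
  ultimately show ?thesis unfolding Pr_equiv_def by auto
qed

section \<open>Facets of a star-shaped sphere\<close>

lemma infinite_ray_inter_open:
  fixes p q :: "'e::real_normed_vector"
  assumes U: "open U" "q \<in> U" and qp: "q \<noteq> p"
  shows "infinite ({p + t *\<^sub>R (q - p) | t. t \<ge> 0} \<inter> U)"
proof
  assume fin: "finite ({p + t *\<^sub>R (q - p) | t. t \<ge> 0} \<inter> U)"
  obtain e where e: "e > 0" "ball q e \<subseteq> U" using U open_contains_ball by blast
  define d where "d = q - p"
  have nd: "norm d > 0" using qp by (simp add: d_def)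
  define \<delta> where "\<delta> = e / (2 * norm d)"
  have \<delta>: "\<delta> > 0" using e(1) nd by (simp add: \<delta>_def)
  have "(\<lambda>t. p + t *\<^sub>R d) ` {1..1+\<delta>} \<subseteq> {p + t *\<^sub>R (q - p) | t. t \<ge> 0} \<inter> U"
  proof
    fix z assume "z \<in> (\<lambda>t. p + t *\<^sub>R d) ` {1..1+\<delta>}"
    then obtain t where t: "t \<in> {1..1+\<delta>}" "z = p + t *\<^sub>R d" by blast
    have "dist z q = norm ((t - 1) *\<^sub>R d)"
      unfolding t(2) d_def dist_norm by (simp add: algebra_simps)
    hence "dist q z = \<bar>t - 1\<bar> * norm d" by (simp add: dist_commute)
    also have "\<dots> \<le> \<delta> * norm d" using t(1) nd by (intro mult_right_mono) auto
    also have "\<dots> < e" using nd e(1) by (simp add: \<delta>_def)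
    finally have "z \<in> U" using e(2) by auto
    moreover have "z \<in> {p + t *\<^sub>R (q - p) | t. t \<ge> 0}"
      using t unfolding d_def by (intro CollectI exI[of _ t]) auto
    ultimately show "z \<in> {p + t *\<^sub>R (q - p) | t. t \<ge> 0} \<inter> U" by blast
  qed
  moreover have "inj_on (\<lambda>t. p + t *\<^sub>R d) {1..1+\<delta>}" using nd by (auto simp: inj_on_def)
  hence "infinite ((\<lambda>t. p + t *\<^sub>R d) ` {1..1+\<delta>})"
    using \<delta> finite_imageD infinite_Icc[of 1 "1 + \<delta>"] by auto
  ultimately show False using fin finite_subset by blast
qed

lemma star_shaped_face_card_le:
  fixes x :: "nat \<Rightarrow> 'e::euclidean_space"
  assumes x: "geom_realization K x" and fin: "\<forall>\<sigma>\<in>K. finite \<sigma>"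
    and ray: "\<forall>d. d \<noteq> 0 \<longrightarrow> card ({p + t *\<^sub>R d | t. t \<ge> 0} \<inter> polyhedron K x) = 1"
    and \<sigma>: "\<sigma> \<in> K"
  shows "card \<sigma> \<le> DIM('e)"
proof (rule ccontr)
  assume "\<not> card \<sigma> \<le> DIM('e)"
  \<comment> \<open>then \<open>x ` \<sigma>\<close> spans a full-dimensional simplex, and a ray through its interior meets
    \<open>|K|\<close> in infinitely many points\<close>
  have inj: "inj_on x \<sigma>" and ind: "\<not> affine_dependent (x ` \<sigma>)"
    using x \<sigma> unfolding geom_realization_def by auto
  have "finite (x ` \<sigma>)" using fin \<sigma> by blast
  hence "\<not> DIM('e) + 2 \<le> card (x ` \<sigma>)" using affine_dependent_biggerset ind by blast
  hence "card (x ` \<sigma>) = Suc DIM('e)" using card_image[OF inj] \<open>\<not> card \<sigma> \<le> DIM('e)\<close> by linarith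
  hence "interior (convex hull (x ` \<sigma>)) \<noteq> {}"
    using interior_convex_hull_eq_empty[of "x ` \<sigma>"] ind by simp
  then obtain q0 where q0: "q0 \<in> interior (convex hull (x ` \<sigma>))" by blast
  obtain e where e: "e > 0" "ball q0 e \<subseteq> interior (convex hull (x ` \<sigma>))"
    using open_contains_ball[of "interior (convex hull (x ` \<sigma>))"] q0 by blast
  obtain b :: 'e where b: "b \<in> Basis" using nonempty_Basis by blast
  define q where "q = (if q0 = p then q0 + (e / 2) *\<^sub>R b else q0)"
  have nb: "norm ((e / 2) *\<^sub>R b) = e / 2" using e(1) b by simp
  have qp: "q \<noteq> p"
  proof (cases "q0 = p")
    case True thus ?thesis using nb e(1) by (auto simp: q_def)
  qed (simp add: q_def)
  have "q \<in> ball q0 e"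
  proof (cases "q0 = p")
    case True thus ?thesis using nb e(1) by (simp add: q_def dist_norm)
  qed (use e(1) in \<open>simp add: q_def\<close>)
  hence q: "q \<in> interior (convex hull (x ` \<sigma>))" using e(2) by blast
  have "convex hull (x ` \<sigma>) \<subseteq> polyhedron K x" using \<sigma> unfolding polyhedron_def by blast
  hence "interior (convex hull (x ` \<sigma>)) \<subseteq> polyhedron K x" using interior_subset by (rule order_trans[rotated])
  hence "infinite ({p + t *\<^sub>R (q - p) | t. t \<ge> 0} \<inter> polyhedron K x)"
    by (intro infinite_super[OF _ infinite_ray_inter_open[OF open_interior q qp]]) blast
  moreover have "q - p \<noteq> 0" using qp by simp
  hence "card ({p + t *\<^sub>R (q - p) | t. t \<ge> 0} \<inter> polyhedron K x) = 1" using ray by blast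
  ultimately show False by simp
qed

lemma star_ray_point_unique:
  fixes x :: "nat \<Rightarrow> 'e::euclidean_space"
  assumes ray: "\<forall>d. d \<noteq> 0 \<longrightarrow> card ({p + t *\<^sub>R d | t. t \<ge> 0} \<inter> polyhedron K x) = 1"
    and d: "d \<noteq> 0" and st: "s \<ge> 0" "t \<ge> 0"
    and P: "p + s *\<^sub>R d \<in> polyhedron K x" "p + t *\<^sub>R d \<in> polyhedron K x"
  shows "p + s *\<^sub>R d = p + t *\<^sub>R d"
proof -
  let ?R = "{p + t *\<^sub>R d | t. t \<ge> 0} \<inter> polyhedron K x"
  have "card ?R = 1" using ray d by blast
  then obtain w where w: "?R = {w}" by (rule card_1_singletonE)
  have "p + s *\<^sub>R d \<in> ?R" using st(1) P(1) by (intro IntI CollectI exI[of _ s] conjI refl)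
  moreover have "p + t *\<^sub>R d \<in> ?R" using st(2) P(2) by (intro IntI CollectI exI[of _ t] conjI refl)
  ultimately show ?thesis unfolding w by simp
qed

lemma polyhedron_subset_star_center:
  fixes x :: "nat \<Rightarrow> 'e::euclidean_space"
  assumes ray: "\<forall>d. d \<noteq> 0 \<longrightarrow> card ({p + t *\<^sub>R d | t. t \<ge> 0} \<inter> polyhedron K x) = 1"
    and p: "p \<in> polyhedron K x"
  shows "polyhedron K x \<subseteq> {p}"
proof
  fix y assume y: "y \<in> polyhedron K x"
  have "y - p = 0 \<or> p + 0 *\<^sub>R (y - p) = p + 1 *\<^sub>R (y - p)"
    using star_ray_point_unique[OF ray, of "y - p" 0 1] p y by auto
  thus "y \<in> {p}" by auto
qed

lemma DIM_eq_1_if_finite_sphere: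
  assumes "finite (sphere (0::'e::euclidean_space) 1)"
  shows "DIM('e) = 1"
proof (rule ccontr)
  assume "DIM('e) \<noteq> 1"
  hence "2 \<le> DIM('e)" using DIM_positive[where 'a='e] by linarith
  hence "sphere (0::'e) 1 = {} \<or> (\<exists>a. sphere (0::'e) 1 = {a})"
    using connected_finite_iff_sing[OF connected_sphere] assms by blast
  moreover obtain b :: 'e where b: "b \<in> Basis" using nonempty_Basis by blast
  have "b \<noteq> - b"
  proof
    assume "b = - b"
    hence "(2::real) *\<^sub>R b = 0" by (metis add.right_inverse scaleR_2)
    thus False using b nonzero_Basis by auto
  qed
  moreover have "b \<in> sphere 0 1" "- b \<in> sphere 0 1" using b by auto
  ultimately show False by (metis empty_iff singletonD)
qed

definition ray_cone :: "'e::real_vector \<Rightarrow> 'e set \<Rightarrow> 'e set" where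
  "ray_cone p X = {p + t *\<^sub>R (y - p) | t y. 0 \<le> t \<and> y \<in> X}"

lemma ray_cone_eq_translation: "ray_cone p X = (+) p ` (conic hull ((\<lambda>y. y - p) ` X))"
  unfolding ray_cone_def conic_hull_explicit by (auto simp: image_iff)

lemma closed_ray_cone:
  fixes p :: "'e::euclidean_space"
  assumes "compact X" "p \<notin> X"
  shows "closed (ray_cone p X)"
proof -
  have "compact ((\<lambda>y. y - p) ` X)" using compact_translation_subtract assms(1) by blast
  moreover have "0 \<notin> (\<lambda>y. y - p) ` X" using assms(2) by auto
  ultimately show ?thesis unfolding ray_cone_eq_translation
    by (intro closed_translation closed_conic_hull) auto
qed

lemma negligible_ray_cone:
  fixes p :: "'e::euclidean_space"
  assumes "finite S" "card S < DIM('e)"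
  shows "negligible (ray_cone p (convex hull S))"
proof -
  define S' where "S' = (\<lambda>y. - p + y) ` S"
  have "card S' \<le> card S" unfolding S'_def by (rule card_image_le[OF assms(1)])
  hence "dim S' < DIM('e)" using dim_le_card'[of S'] assms by (simp add: S'_def)
  hence "negligible ((+) p ` span S')" by (intro negligible_translation negligible_lowdim) simp
  moreover have "ray_cone p (convex hull S) \<subseteq> (+) p ` span S'"
  proof
    fix z assume "z \<in> ray_cone p (convex hull S)"
    then obtain t y where t: "z = p + t *\<^sub>R (y - p)" "y \<in> convex hull S" unfolding ray_cone_def by blast
    have "- p + y \<in> convex hull S'"
      unfolding S'_def convex_hull_translation using t(2) by blast
    hence "y - p \<in> span S'" using convex_hull_subset_span by force
    thus "z \<in> (+) p ` span S'" using t(1) span_mul by blast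
  qed
  ultimately show ?thesis using negligible_subset by blast
qed

lemma star_cones_cover:
  fixes x :: "nat \<Rightarrow> 'e::euclidean_space"
  assumes ray: "\<forall>d. d \<noteq> 0 \<longrightarrow> card ({p + t *\<^sub>R d | t. t \<ge> 0} \<inter> polyhedron K x) = 1"
    and p: "p \<notin> polyhedron K x" and \<sigma>: "\<sigma> \<in> K" "\<sigma> \<noteq> {}"
  shows "\<exists>\<tau>\<in>K. z \<in> ray_cone p (convex hull (x ` \<tau>))"
proof (cases "z = p")
  case True
  obtain i where "i \<in> \<sigma>" using \<sigma>(2) by blast
  moreover have "z = p + 0 *\<^sub>R (x i - p)" using True by simp
  ultimately show ?thesis using \<sigma>(1) unfolding ray_cone_def
    by (intro bexI[of _ \<sigma>] CollectI exI[of _ 0] exI[of _ "x i"]) (auto simp: hull_inc)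
next
  case False
  hence "card ({p + t *\<^sub>R (z - p) | t. t \<ge> 0} \<inter> polyhedron K x) = 1" using ray by simp
  then obtain w where "{p + t *\<^sub>R (z - p) | t. t \<ge> 0} \<inter> polyhedron K x = {w}"
    by (rule card_1_singletonE)
  then obtain t where t: "t \<ge> 0" "w = p + t *\<^sub>R (z - p)" "w \<in> polyhedron K x" by blast
  then obtain \<tau> where \<tau>: "\<tau> \<in> K" "w \<in> convex hull (x ` \<tau>)" unfolding polyhedron_def by blast
  have "t \<noteq> 0" using t p by auto
  hence "z = p + (1 / t) *\<^sub>R (w - p)" using t(2) by simp
  thus ?thesis using \<tau> t(1) unfolding ray_cone_def
    by (intro bexI[of _ \<tau>] CollectI exI[of _ "1 / t"] exI[of _ w]) auto
qed

lemma vertex_notin_star_cone: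
  fixes x :: "nat \<Rightarrow> 'e::euclidean_space"
  assumes x: "geom_realization K x"
    and ray: "\<forall>d. d \<noteq> 0 \<longrightarrow> card ({p + t *\<^sub>R d | t. t \<ge> 0} \<inter> polyhedron K x) = 1"
    and p: "p \<notin> polyhedron K x" and \<tau>: "\<tau> \<in> K" and v: "{v} \<in> K" "v \<notin> \<tau>"
  shows "x v \<notin> ray_cone p (convex hull (x ` \<tau>))"
proof
  assume "x v \<in> ray_cone p (convex hull (x ` \<tau>))"
  then obtain t y where t: "0 \<le> t" "y \<in> convex hull (x ` \<tau>)" "x v = p + t *\<^sub>R (y - p)"
    unfolding ray_cone_def by blast
  have y: "y \<in> polyhedron K x" using \<tau> t(2) unfolding polyhedron_def by blast
  have "x v \<in> polyhedron K x" using v(1) hull_inc[of "x v" "x ` {v}"] unfolding polyhedron_def by blast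
  hence on_ray: "p + t *\<^sub>R (y - p) \<in> polyhedron K x" unfolding t(3) .
  have d: "y - p \<noteq> 0" using y p by auto
  have "p + 1 *\<^sub>R (y - p) \<in> polyhedron K x" using y by simp
  hence eq: "p + 1 *\<^sub>R (y - p) = p + t *\<^sub>R (y - p)"
    using on_ray by (rule star_ray_point_unique[OF ray d zero_le_one t(1)])
  have "x v = p + 1 *\<^sub>R (y - p)" unfolding t(3) eq ..
  hence "x v \<in> convex hull (x ` \<tau>) \<inter> convex hull (x ` {v})" using t(2) by (simp add: hull_inc)
  also have "\<dots> = convex hull (x ` (\<tau> \<inter> {v}))"
    using x[unfolded geom_realization_def, THEN conjunct2] \<tau> v(1) by blast
  finally show False using v(2) by simp
qed

text \<open>If the star center \<open>p\<close> lies off \<open>|K|\<close>, the cones from \<open>p\<close> over the simplices of \<open>K\<close> cover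
  the whole space; near the vertex \<open>v\<close> only cones over simplices through \<open>v\<close> occur, and these are
  negligible unless one of those simplices has \<open>DIM('e)\<close> vertices.\<close>

lemma star_shaped_vertex_in_facet:
  fixes x :: "nat \<Rightarrow> 'e::euclidean_space"
  assumes K: "simplicial_complex_on m K" and x: "geom_realization K x"
    and ray: "\<forall>d. d \<noteq> 0 \<longrightarrow> card ({p + t *\<^sub>R d | t. t \<ge> 0} \<inter> polyhedron K x) = 1"
    and p: "p \<notin> polyhedron K x" and dim: "\<forall>\<sigma>\<in>K. card \<sigma> \<le> DIM('e)" and v: "v < m"
  shows "\<exists>\<rho>\<in>K. v \<in> \<rho> \<and> card \<rho> = DIM('e)"
proof (rule ccontr)
  assume no_facet: "\<not> (\<exists>\<rho>\<in>K. v \<in> \<rho> \<and> card \<rho> = DIM('e))"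
  have small: "card \<tau> < DIM('e)" if "\<tau> \<in> K" "v \<in> \<tau>" for \<tau>
  proof -
    have "card \<tau> \<le> DIM('e)" "card \<tau> \<noteq> DIM('e)" using dim no_facet that by blast+
    thus ?thesis by simp
  qed
  have fin: "finite \<tau>" if "\<tau> \<in> K" for \<tau>
    using K that unfolding simplicial_complex_on_def by (meson finite_lessThan finite_subset)
  have sing: "{v} \<in> K" using K v unfolding simplicial_complex_on_def by blast
  have "K \<subseteq> Pow {..<m}" using K unfolding simplicial_complex_on_def by blast
  hence K_fin: "finite K" by (rule finite_subset) simp
  have in_P: "y \<in> polyhedron K x" if "\<tau> \<in> K" "y \<in> convex hull (x ` \<tau>)" for \<tau> y
    using that unfolding polyhedron_def by blast
  let ?C = "\<lambda>\<tau>. ray_cone p (convex hull (x ` \<tau>))"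
  have cover: "\<exists>\<tau>\<in>K. z \<in> ?C \<tau>" for z using star_cones_cover[OF ray p sing] by simp
  have far: "x v \<notin> ?C \<tau>" if "\<tau> \<in> K" "v \<notin> \<tau>" for \<tau>
    using vertex_notin_star_cone[OF x ray p that(1) sing that(2)] .
  define U where "U = - (\<Union>\<tau>\<in>{\<tau>\<in>K. v \<notin> \<tau>}. ?C \<tau>)"
  have closed: "closed (?C \<tau>)" if "\<tau> \<in> K" for \<tau>
  proof (rule closed_ray_cone)
    show "compact (convex hull (x ` \<tau>))" using fin[OF that] by (simp add: finite_imp_compact_convex_hull)
    show "p \<notin> convex hull (x ` \<tau>)" using in_P[OF that] p by blast
  qed
  have "open U" unfolding U_def using K_fin closed by (intro open_Compl closed_UN) auto
  moreover have "x v \<in> U" unfolding U_def using far by blast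
  ultimately obtain e where e: "e > 0" "ball (x v) e \<subseteq> U" using open_contains_ball[of U] by blast
  have "ball (x v) e \<subseteq> (\<Union>\<tau>\<in>{\<tau>\<in>K. v \<in> \<tau>}. ?C \<tau>)"
  proof
    fix z assume z: "z \<in> ball (x v) e"
    obtain \<tau> where \<tau>: "\<tau> \<in> K" "z \<in> ?C \<tau>" using cover by blast
    hence "v \<in> \<tau>" using z e(2) unfolding U_def by blast
    thus "z \<in> (\<Union>\<tau>\<in>{\<tau>\<in>K. v \<in> \<tau>}. ?C \<tau>)" using \<tau> by blast
  qed
  moreover have "negligible (?C \<tau>)" if "\<tau> \<in> K" "v \<in> \<tau>" for \<tau>
  proof (rule negligible_ray_cone)
    show "finite (x ` \<tau>)" using fin[OF that(1)] by simp
    show "card (x ` \<tau>) < DIM('e)" using card_image_le[OF fin[OF that(1)], of x] small[OF that] by linarith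
  qed
  hence "negligible (\<Union>\<tau>\<in>{\<tau>\<in>K. v \<in> \<tau>}. ?C \<tau>)" using K_fin by (intro negligible_Union) auto
  ultimately have "negligible (ball (x v) e)" using negligible_subset by blast
  thus False using negligible_convex_interior[of "ball (x v) e"] e(1) by simp
qed

text \<open>If the star center lies on \<open>|K|\<close>, then \<open>|K|\<close> is a point, so \<open>K\<close> has no edges and any
  sphere homeomorphic to a realization of \<open>K\<close> is finite.\<close>

lemma DIM_eq_1_if_star_center_in_polyhedron:
  fixes x x' :: "nat \<Rightarrow> 'e::euclidean_space"
  assumes K: "simplicial_complex_on m K" and x: "geom_realization K x"
    and ray: "\<forall>d. d \<noteq> 0 \<longrightarrow> card ({p + t *\<^sub>R d | t. t \<ge> 0} \<inter> polyhedron K x) = 1"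
    and p: "p \<in> polyhedron K x" and sphere: "polyhedron K x' homeomorphic sphere (0::'e) 1"
  shows "DIM('e) = 1"
proof -
  have card_le_1: "card \<sigma> \<le> 1" if \<sigma>: "\<sigma> \<in> K" for \<sigma>
  proof -
    have "x ` \<sigma> \<subseteq> {p}"
    proof
      fix z assume "z \<in> x ` \<sigma>"
      hence "z \<in> polyhedron K x" using \<sigma> hull_inc[of z "x ` \<sigma>"] unfolding polyhedron_def by blast
      thus "z \<in> {p}" using polyhedron_subset_star_center[OF ray p] by blast
    qed
    hence "card (x ` \<sigma>) \<le> 1" using card_mono[of "{p}"] by simp
    moreover have "inj_on x \<sigma>" using x \<sigma> unfolding geom_realization_def by blast
    ultimately show ?thesis by (simp add: card_image)
  qed
  have "polyhedron K x' \<subseteq> x' ` {..<m}"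
  proof
    fix z assume "z \<in> polyhedron K x'"
    then obtain \<sigma> where \<sigma>: "\<sigma> \<in> K" "z \<in> convex hull (x' ` \<sigma>)" unfolding polyhedron_def by blast
    have "\<sigma> \<subseteq> {..<m}" using K \<sigma>(1) unfolding simplicial_complex_on_def by blast
    moreover have "\<sigma> = {} \<or> (\<exists>i. \<sigma> = {i})"
      using card_le_1[OF \<sigma>(1)] finite_subset[OF calculation] by (auto simp: le_Suc_eq card_1_singleton_iff)
    ultimately show "z \<in> x' ` {..<m}" using \<sigma>(2) by auto
  qed
  hence fin_pol: "finite (polyhedron K x')" using finite_subset by blast
  have "sphere (0::'e) 1 homeomorphic polyhedron K x'" using sphere homeomorphic_sym by blast
  hence "finite (sphere (0::'e) 1)" using homeomorphic_finite[OF fin_pol] by blast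
  thus ?thesis by (rule DIM_eq_1_if_finite_sphere)
qed

lemma star_shaped_sphere_facets:
  assumes dim: "DIM('e::euclidean_space) = n" and K: "star_shaped_sphere TYPE('e) m K" and v: "v < m"
  shows "(\<forall>\<sigma>\<in>K. card \<sigma> \<le> n) \<and> (\<exists>\<rho>\<in>K. v \<in> \<rho> \<and> card \<rho> = n)"
proof -
  note K = K[unfolded star_shaped_sphere_def]
  have sc: "simplicial_complex_on m K" using K by (rule conjunct1)
  obtain x' :: "nat \<Rightarrow> 'e" where sphere: "polyhedron K x' homeomorphic sphere (0::'e) 1"
    using K[THEN conjunct2, THEN conjunct1] by (elim exE conjE)
  obtain x :: "nat \<Rightarrow> 'e" and p where x: "geom_realization K x"
    and ray: "\<forall>d. d \<noteq> 0 \<longrightarrow> card ({p + t *\<^sub>R d | t. t \<ge> 0} \<inter> polyhedron K x) = 1"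
    using K[THEN conjunct2, THEN conjunct2] by (elim exE conjE)
  have fin: "\<forall>\<sigma>\<in>K. finite \<sigma>"
    using sc unfolding simplicial_complex_on_def by (meson finite_lessThan finite_subset)
  have dim_le: "\<forall>\<sigma>\<in>K. card \<sigma> \<le> DIM('e)" using star_shaped_face_card_le[OF x fin ray] by blast
  moreover have "\<exists>\<rho>\<in>K. v \<in> \<rho> \<and> card \<rho> = DIM('e)"
  proof (cases "p \<in> polyhedron K x")
    case True
    hence "DIM('e) = 1" by (rule DIM_eq_1_if_star_center_in_polyhedron[OF sc x ray _ sphere])
    moreover have "{v} \<in> K" using sc v unfolding simplicial_complex_on_def by blast
    ultimately show ?thesis by (intro bexI[of _ "{v}"]) simp_all
  qed (rule star_shaped_vertex_in_facet[OF sc x ray _ dim_le v])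
  ultimately show ?thesis using dim by blast
qed

lemma pre_edge_iff_Pr_equiv:
  fixes l1 l2 :: "'a::comm_ring_1 mat"
  assumes dim: "DIM('e::euclidean_space) = n" and K: "star_shaped_sphere TYPE('e) m K" and v: "v < m"
    and c1: "char_map n m K l1" and c2: "char_map n m K l2"
  shows "pre_edge n m K v l1 l2 \<longleftrightarrow> Pr_equiv n l1 l2 v"
proof -
  have sc: "simplicial_complex_on m K" using K unfolding star_shaped_sphere_def by (rule conjunct1)
  obtain \<rho> where \<rho>: "\<rho> \<in> K" "v \<in> \<rho>" "card \<rho> = n" and le: "\<forall>\<sigma>\<in>K. card \<sigma> \<le> n"
    using star_shaped_sphere_facets[OF dim K v] by blast
  obtain n0 where n: "n = Suc n0" using DIM_positive[where 'a='e] dim not0_implies_Suc by force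
  have l: "l1 \<in> carrier_mat n m" "l2 \<in> carrier_mat n m" using c1 c2 unfolding char_map_def by auto
  show ?thesis
  proof
    assume "pre_edge n m K v l1 l2"
    thus "Pr_equiv n l1 l2 v" using Pr_equiv_if_pre_edge[OF sc \<rho>(1,2) _ v, of n0 l1 l2] \<rho>(3) l n by simp
  next
    assume "Pr_equiv n l1 l2 v"
    thus "pre_edge n m K v l1 l2" using pre_edge_if_Pr_equiv[OF sc _ v, of n0 l1 l2] le c1 c2 n by simp
  qed
qed

theorem mainTheorem4:
  fixes n m v :: nat and K :: "nat set set"
  assumes "DIM('e::euclidean_space) = n"
    and "star_shaped_sphere TYPE('e) m K"
    and "v < m"
  shows "(\<forall>l1 l2 :: int mat. char_map n m K l1 \<and> char_map n m K l2 \<longrightarrow>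
            (pre_edge n m K v l1 l2 \<longleftrightarrow> Pr_equiv n l1 l2 v)) \<and>
         (\<forall>l1 l2 :: bit mat. char_map n m K l1 \<and> char_map n m K l2 \<longrightarrow>
            (pre_edge n m K v l1 l2 \<longleftrightarrow> Pr_equiv n l1 l2 v))"
proof (intro conjI allI impI)
  fix l1 l2 :: "int mat" assume "char_map n m K l1 \<and> char_map n m K l2"
  thus "pre_edge n m K v l1 l2 \<longleftrightarrow> Pr_equiv n l1 l2 v" using pre_edge_iff_Pr_equiv[OF assms] by blast
next
  fix l1 l2 :: "bit mat" assume "char_map n m K l1 \<and> char_map n m K l2"
  thus "pre_edge n m K v l1 l2 \<longleftrightarrow> Pr_equiv n l1 l2 v" using pre_edge_iff_Pr_equiv[OF assms] by blast
qed

end
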